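(* Let $\mathcal{H}$ be a finite-dimensional Hilbert space and let the set of free states be $\mathcal{F}(\mathcal{H})=\bigcup_k\mathcal{F}_k(\mathcal{H})\subseteq\mathcal{D}(\mathcal{H})$, where each $\mathcal{F}_k(\mathcal{H})$ is a closed convex set and $\mathcal{F}(\mathcal{H})$ is closed. For any resource state $\rho\in\mathcal{D}(\mathcal{H})\setminus\mathcal{F}(\mathcal{H})$, \[1-\sup_k\ \min_{\{p_i,\Lambda_i\}_i,\{M_i\}_i}\frac{p_{\mathrm{err}}(\rho,\{p_i,\Lambda_i\}_i,\{M_i\}_i)}{\min_{\sigma_k\in\mathcal{F}_k(\mathcal{H})}p_{\mathrm{err}}(\sigma_k,\{p_i,\Lambda_i\}_i,\{M_i\}_i)}=\mathrm{WoR}_{\mathcal{F}(\mathcal{H})}(\rho).\]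
   Context: $\mathcal{D}(\mathcal{H})$ is the set of density operators on $\mathcal{H}$. A channel ensemble $\{p_i,\Lambda_i\}_i$ consists of a finite probability distribution $(p_i)_i$ and quantum channels $\Lambda_i$ from operators on $\mathcal{H}$ to operators on a common finite-dimensional output space; $\{M_i\}_i$ is a POVM on that output space; $p_{\mathrm{err}}(\omega,\{p_i,\Lambda_i\}_i,\{M_i\}_i)=\sum_ip_i\operatorname{tr}[M_i\Lambda_i(\omega)]$. The outer minimum is over all channel ensembles and POVMs. The weight of resource is $\mathrm{WoR}_{\mathcal{F}(\mathcal{H})}(\rho)=\min\{s\ge0:\exists\sigma\in\mathcal{F}(\mathcal{H}),\tau\in\mathcal{D}(\mathcal{H}),\ \rho=s\tau+(1-s)\sigma\}$. *)

theory Defs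
  imports "HOL-Analysis.Analysis" "Jordan_Normal_Form.Matrix"
begin

text \<open>Operators on an n-dimensional Hilbert space are n x n complex matrices (JNF type complex mat).\<close>

definition mtr :: "complex mat \<Rightarrow> complex" where
  "mtr A = (\<Sum>i<dim_row A. A $$ (i,i))"

definition psd :: "nat \<Rightarrow> complex mat \<Rightarrow> bool" where
  "psd n A \<longleftrightarrow> A \<in> carrier_mat n n \<and>
     (\<forall>v\<in>carrier_vec n. Im (\<Sum>i<n. cnj (v $ i) * (A *\<^sub>v v) $ i) = 0 \<and>
                         Re (\<Sum>i<n. cnj (v $ i) * (A *\<^sub>v v) $ i) \<ge> 0)"

definition density :: "nat \<Rightarrow> complex mat \<Rightarrow> bool" where
  "density n \<rho> \<longleftrightarrow> psd n \<rho> \<and> mtr \<rho> = 1"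

definition lin_map :: "nat \<Rightarrow> (complex mat \<Rightarrow> complex mat) \<Rightarrow> bool" where
  "lin_map n \<Lambda> \<longleftrightarrow> (\<forall>A\<in>carrier_mat n n. \<forall>B\<in>carrier_mat n n. \<Lambda> (A + B) = \<Lambda> A + \<Lambda> B) \<and>
                     (\<forall>A\<in>carrier_mat n n. \<forall>c. \<Lambda> (c \<cdot>\<^sub>m A) = c \<cdot>\<^sub>m \<Lambda> A)"

text \<open>id_k \<otimes> Lambda applied to a (k*n) x (k*n) matrix viewed as a k x k block matrix of n x n blocks.\<close>
definition ampl :: "nat \<Rightarrow> nat \<Rightarrow> nat \<Rightarrow> (complex mat \<Rightarrow> complex mat) \<Rightarrow> complex mat \<Rightarrow> complex mat" where
  "ampl k n m \<Lambda> X = mat (k*m) (k*m) (\<lambda>(r,c).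
      \<Lambda> (mat n n (\<lambda>(i,j). X $$ ((r div m) * n + i, (c div m) * n + j))) $$ (r mod m, c mod m))"

definition compl_pos :: "nat \<Rightarrow> nat \<Rightarrow> (complex mat \<Rightarrow> complex mat) \<Rightarrow> bool" where
  "compl_pos n m \<Lambda> \<longleftrightarrow> (\<forall>k X. psd (k*n) X \<longrightarrow> psd (k*m) (ampl k n m \<Lambda> X))"

definition channel :: "nat \<Rightarrow> nat \<Rightarrow> (complex mat \<Rightarrow> complex mat) \<Rightarrow> bool" where
  "channel n m \<Lambda> \<longleftrightarrow> (\<forall>A\<in>carrier_mat n n. \<Lambda> A \<in> carrier_mat m m) \<and> lin_map n \<Lambda> \<and>
     compl_pos n m \<Lambda> \<and> (\<forall>A\<in>carrier_mat n n. mtr (\<Lambda> A) = mtr A)"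

definition povm :: "nat \<Rightarrow> nat \<Rightarrow> (nat \<Rightarrow> complex mat) \<Rightarrow> bool" where
  "povm m N M \<longleftrightarrow> (\<forall>i<N. psd m (M i)) \<and>
     (\<forall>a<m. \<forall>b<m. (\<Sum>i<N. M i $$ (a,b)) = (1\<^sub>m m) $$ (a,b))"

definition ensemble :: "nat \<Rightarrow> nat \<Rightarrow> nat \<Rightarrow> (nat \<Rightarrow> real) \<Rightarrow> (nat \<Rightarrow> complex mat \<Rightarrow> complex mat) \<Rightarrow> bool" where
  "ensemble n m N p \<Lambda> \<longleftrightarrow> (\<forall>i<N. p i \<ge> 0) \<and> (\<Sum>i<N. p i) = 1 \<and> (\<forall>i<N. channel n m (\<Lambda> i))"

type_synonym task = "nat \<times> (nat \<Rightarrow> real) \<times> (nat \<Rightarrow> complex mat \<Rightarrow> complex mat) \<times> (nat \<Rightarrow> complex mat)"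

definition tasks :: "nat \<Rightarrow> task set" where
  "tasks n = {(N, p, \<Lambda>, M). \<exists>m. ensemble n m N p \<Lambda> \<and> povm m N M}"

definition p_err :: "task \<Rightarrow> complex mat \<Rightarrow> real" where
  "p_err T \<omega> = (case T of (N, p, \<Lambda>, M) \<Rightarrow> (\<Sum>i<N. p i * Re (mtr (M i * \<Lambda> i \<omega>))))"

definition convex_mats :: "complex mat set \<Rightarrow> bool" where
  "convex_mats S \<longleftrightarrow> (\<forall>A\<in>S. \<forall>B\<in>S. \<forall>t::real. 0 \<le> t \<and> t \<le> 1 \<longrightarrow>
       complex_of_real t \<cdot>\<^sub>m A + complex_of_real (1 - t) \<cdot>\<^sub>m B \<in> S)"

text \<open>Closedness in the (norm) topology of n x n complex matrices, i.e. under entrywise limits.\<close>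
definition closed_mats :: "nat \<Rightarrow> complex mat set \<Rightarrow> bool" where
  "closed_mats n S \<longleftrightarrow> S \<subseteq> carrier_mat n n \<and>
     (\<forall>X A. (\<forall>t. X t \<in> S) \<longrightarrow> A \<in> carrier_mat n n \<longrightarrow>
        (\<forall>i<n. \<forall>j<n. (\<lambda>t. X t $$ (i,j)) \<longlonglongrightarrow> A $$ (i,j)) \<longrightarrow> A \<in> S)"

definition WoR :: "nat \<Rightarrow> complex mat set \<Rightarrow> complex mat \<Rightarrow> real" where
  "WoR n F \<rho> = Inf {s::real. s \<ge> 0 \<and> (\<exists>\<sigma>\<in>F. \<exists>\<tau>. density n \<tau> \<and>
       \<rho> = complex_of_real s \<cdot>\<^sub>m \<tau> + complex_of_real (1 - s) \<cdot>\<^sub>m \<sigma>)}"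

end

theory Submission
  imports Defs
begin

text \<open>If \<open>\<rho> = s \<tau> + (1 - s) \<sigma>\<close> with \<open>\<sigma> \<in> F\<^sub>k\<close>, linearity and positivity of \<open>p_err\<close> give
  \<open>p_err \<rho> \<ge> (1 - s) p_err \<sigma>\<close>, so every error ratio for \<open>F\<^sub>k\<close> is at least \<open>1 - s\<close>.
  Conversely, if all ratios for \<open>F\<^sub>k\<close> exceeded some \<open>t > 1 - WoR\<close>, then \<open>\<rho> - t \<sigma>\<close> could not be
  positive for any \<open>\<sigma> \<in> F\<^sub>k\<close> (it would split off weight \<open>t\<close> of \<open>\<sigma>\<close> from \<open>\<rho>\<close>).
  The nearest point of the closed convex set \<open>\<rho> - t F\<^sub>k - PSD\<close> to \<open>0\<close> then yields a positive
  observable \<open>Y\<close> with \<open>tr(Y \<rho>) < t tr(Y \<sigma>)\<close> uniformly on \<open>F\<^sub>k\<close>, and measuring the effect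
  \<open>c Y\<close> has ratio below \<open>t\<close>. Hence the minimal ratio for \<open>F\<^sub>k\<close> is \<open>1 - WoR(F\<^sub>k)\<close>, and the
  supremum over \<open>k\<close> turns into the infimum of the weights, which is the weight for the union.\<close>

definition qform :: "nat \<Rightarrow> complex mat \<Rightarrow> (nat \<Rightarrow> complex) \<Rightarrow> complex" where
  "qform n B f = (\<Sum>i<n. \<Sum>j<n. cnj (f i) * B $$ (i,j) * f j)"

lemma qform_vec:
  assumes "B \<in> carrier_mat n n" "v \<in> carrier_vec n"
  shows "(\<Sum>i<n. cnj (v $ i) * (B *\<^sub>v v) $ i) = qform n B (\<lambda>i. v $ i)"
  unfolding qform_def using assms
  by (auto simp: scalar_prod_def sum_distrib_left mult.assoc lessThan_atLeast0 intro!: sum.cong)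

lemma psd_iff_qform:
  "psd n B \<longleftrightarrow> B \<in> carrier_mat n n \<and> (\<forall>f. Im (qform n B f) = 0 \<and> Re (qform n B f) \<ge> 0)"
proof
  assume "psd n B"
  then have B: "B \<in> carrier_mat n n"
    and nonneg: "\<And>v. v \<in> carrier_vec n \<Longrightarrow> Im (\<Sum>i<n. cnj (v $ i) * (B *\<^sub>v v) $ i) = 0 \<and>
                         Re (\<Sum>i<n. cnj (v $ i) * (B *\<^sub>v v) $ i) \<ge> 0"
    unfolding psd_def by auto
  have "qform n B f = qform n B (\<lambda>i. vec n f $ i)" for f
    unfolding qform_def by (auto intro!: sum.cong)
  then show "B \<in> carrier_mat n n \<and> (\<forall>f. Im (qform n B f) = 0 \<and> Re (qform n B f) \<ge> 0)"
    using B nonneg[of "vec n _"] qform_vec[OF B] by (metis vec_carrier)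
next
  assume "B \<in> carrier_mat n n \<and> (\<forall>f. Im (qform n B f) = 0 \<and> Re (qform n B f) \<ge> 0)"
  then show "psd n B"
    unfolding psd_def by (simp add: qform_vec)
qed

lemma psd_carrier: "psd n B \<Longrightarrow> B \<in> carrier_mat n n"
  unfolding psd_def by auto

lemma psd_qform: "psd n B \<Longrightarrow> Im (qform n B f) = 0 \<and> Re (qform n B f) \<ge> 0"
  unfolding psd_iff_qform by auto

lemma if_zero_simps:
  "x * (if P then y else 0) = (if P then x * y else (0::'a::mult_zero))"
  "(if P then y else 0) * x = (if P then y * x else (0::'a::mult_zero))"
  "cnj (if P then c else 0) = (if P then cnj c else 0)"
  by auto

lemma qform_single:
  assumes "i < n"
  shows "qform n B (\<lambda>a. if a = i then \<alpha> else 0) = cnj \<alpha> * \<alpha> * B $$ (i,i)"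
  unfolding qform_def using assms by (simp add: if_zero_simps)

lemma qform_pair:
  assumes "i < n" "j < n" "i \<noteq> j"
  shows "qform n B (\<lambda>a. if a = i then \<alpha> else if a = j then \<beta> else 0) =
     cnj \<alpha> * \<alpha> * B $$ (i,i) + cnj \<alpha> * \<beta> * B $$ (i,j) + cnj \<beta> * \<alpha> * B $$ (j,i) + cnj \<beta> * \<beta> * B $$ (j,j)"
proof -
  have f: "(\<lambda>a. if a = i then \<alpha> else if a = j then \<beta> else 0) =
        (\<lambda>a. (if a = i then \<alpha> else 0) + (if a = j then \<beta> else 0))"
    using assms by auto
  show ?thesis
    unfolding f qform_def using assms by (simp add: distrib_left distrib_right sum.distrib if_zero_simps)
qed

lemma psd_diag:
  assumes "psd n B" "i < n"
  shows "Im (B $$ (i,i)) = 0" "Re (B $$ (i,i)) \<ge> 0"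
  using psd_qform[OF assms(1), of "\<lambda>a. if a = i then 1 else 0"] qform_single[OF assms(2), of B 1] by auto

lemma psd_hermitian_entry:
  assumes "psd n B" "i < n" "j < n"
  shows "B $$ (j,i) = cnj (B $$ (i,j))"
proof (cases "i = j")
  case True
  then show ?thesis using psd_diag[OF assms(1,2)] by (simp add: complex_eq_iff)
next
  case False
  have "Im (B $$ (i,i)) = 0" "Im (B $$ (j,j)) = 0"
    using psd_diag assms by auto
  moreover have "Im (qform n B (\<lambda>a. if a = i then 1 else if a = j then 1 else 0)) = 0"
    "Im (qform n B (\<lambda>a. if a = i then 1 else if a = j then \<i> else 0)) = 0"
    using psd_qform[OF assms(1)] by blast+
  ultimately show ?thesis
    unfolding qform_pair[OF assms(2,3) False] by (simp add: complex_eq_iff)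
qed

lemma cnj_mult_self: "cnj z * z = complex_of_real ((cmod z)^2)"
  by (metis complex_norm_square mult.commute of_real_power)

text \<open>The form evaluated at \<open>e\<^sub>i - s cnj(B\<^sub>i\<^sub>j) e\<^sub>j\<close>.\<close>

lemma psd_offdiag_quadratic:
  assumes "psd n B" "i < n" "j < n" "i \<noteq> j"
  shows "Re (B $$ (i,i)) - 2 * s * (cmod (B $$ (i,j)))^2 + s^2 * (cmod (B $$ (i,j)))^2 * Re (B $$ (j,j)) \<ge> 0"
proof -
  let ?b = "B $$ (i,j)"
  let ?f = "\<lambda>a. if a = i then 1 else if a = j then - of_real s * cnj ?b else 0"
  have "B $$ (j,i) = cnj ?b"
    using psd_hermitian_entry[OF assms(1,2,3)] .
  then have "qform n B ?f = B $$ (i,i) - 2 * of_real s * (cnj ?b * ?b) + of_real s * of_real s * (cnj ?b * ?b) * B $$ (j,j)"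
    unfolding qform_pair[OF assms(2,3,4)] by (simp add: algebra_simps)
  moreover have "Im (B $$ (i,i)) = 0" "Im (B $$ (j,j)) = 0"
    using psd_diag assms by auto
  ultimately show ?thesis
    using psd_qform[OF assms(1), of ?f] by (simp add: cnj_mult_self power2_eq_square)
qed

lemma psd_zero_diag:
  assumes "psd n B" "i < n" "j < n" "B $$ (i,i) = 0"
  shows "B $$ (i,j) = 0" "B $$ (j,i) = 0"
proof -
  show "B $$ (i,j) = 0"
  proof (cases "i = j")
    case True
    then show ?thesis using assms by simp
  next
    case False
    let ?x = "(cmod (B $$ (i,j)))^2"
    define s where "s = 1 / (Re (B $$ (j,j)) + 1)"
    have "Re (B $$ (j,j)) \<ge> 0"
      using psd_diag assms by auto
    then have s: "s > 0" "s * Re (B $$ (j,j)) < 1"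
      unfolding s_def by (auto simp: field_simps)
    have "- 2 * s * ?x + s^2 * ?x * Re (B $$ (j,j)) \<ge> 0"
      using psd_offdiag_quadratic[OF assms(1-3) False, of s] assms(4) by simp
    then have "s * ?x * (s * Re (B $$ (j,j)) - 2) \<ge> 0"
      by (simp add: algebra_simps power2_eq_square)
    with s have "s * ?x \<le> 0"
      by (auto simp: zero_le_mult_iff)
    with s show ?thesis
      by (simp add: mult_le_0_iff)
  qed
  then show "B $$ (j,i) = 0"
    using psd_hermitian_entry[OF assms(1,2,3)] by simp
qed

lemma psd_offdiag_le:
  assumes "psd n B" "i < n" "j < n"
  shows "cmod (B $$ (i,j)) \<le> (Re (B $$ (i,i)) + Re (B $$ (j,j))) / 2"
proof (cases "i = j \<or> B $$ (i,j) = 0")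
  case True
  then show ?thesis
    using psd_diag[OF assms(1,2)] psd_diag(2)[OF assms(1,3)] by (auto simp: cmod_def)
next
  case False
  let ?c = "cmod (B $$ (i,j))"
  have "Re (B $$ (i,i)) - 2 * (1/?c) * ?c^2 + (1/?c)^2 * ?c^2 * Re (B $$ (j,j)) \<ge> 0"
    using False psd_offdiag_quadratic[OF assms] by blast
  then show ?thesis
    using False by (simp add: power2_eq_square field_simps)
qed

lemma psd_trace_zero_entry:
  assumes "psd n A" "(\<Sum>i<n. A $$ (i,i)) = 0" "i < n" "j < n"
  shows "A $$ (i,j) = 0"
proof -
  have "(\<Sum>i<n. Re (A $$ (i,i))) = 0"
    using arg_cong[OF assms(2), of Re] by (simp add: Re_sum)
  then have "Re (A $$ (i,i)) = 0"
    using sum_nonneg_eq_0_iff[of "{..<n}" "\<lambda>i. Re (A $$ (i,i))"] psd_diag(2)[OF assms(1)] assms(3) by auto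
  then have "A $$ (i,i) = 0"
    using psd_diag(1)[OF assms(1,3)] by (simp add: complex_eq_iff)
  then show ?thesis
    using psd_zero_diag(1)[OF assms(1,3,4)] by simp
qed

definition schur_compl :: "nat \<Rightarrow> complex mat \<Rightarrow> nat \<Rightarrow> complex mat" where
  "schur_compl n B k = mat n n (\<lambda>(i,j). B $$ (i,j) - B $$ (i,k) * B $$ (k,j) / B $$ (k,k))"

lemma sum_if_const: "(\<Sum>j\<in>A. if P then g j else 0) = (if P then sum g A else 0)"
  by auto

lemma qform_schur_compl:
  assumes k: "k < n" and d: "B $$ (k,k) \<noteq> 0" "cnj (B $$ (k,k)) = B $$ (k,k)"
  shows "qform n (schur_compl n B k) f =
    qform n B (\<lambda>a. f a - (if a = k then (\<Sum>j<n. B $$ (k,j) * f j) / B $$ (k,k) else 0))"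
proof -
  define d where "d = B $$ (k,k)"
  define \<beta> where "\<beta> = (\<Sum>j<n. B $$ (k,j) * f j)"
  define \<gamma> where "\<gamma> = (\<Sum>i<n. cnj (f i) * B $$ (i,k))"
  define c where "c = \<beta> / d"
  have "qform n (schur_compl n B k) f =
      (\<Sum>i<n. \<Sum>j<n. cnj (f i) * B $$ (i,j) * f j - cnj (f i) * B $$ (i,k) * (B $$ (k,j) * f j) / d)"
    unfolding qform_def schur_compl_def d_def
    by (intro sum.cong refl) (auto simp: algebra_simps diff_divide_distrib)
  also have "\<dots> = qform n B f - \<gamma> * \<beta> / d"
    unfolding qform_def \<gamma>_def \<beta>_def sum_subtractf
    by (simp add: sum_divide_distrib sum_distrib_left sum_distrib_right mult.assoc, rule sum.swap)
  finally have lhs: "qform n (schur_compl n B k) f = qform n B f - \<gamma> * \<beta> / d" .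
  have "qform n B (\<lambda>a. f a - (if a = k then c else 0)) =
     (\<Sum>i<n. \<Sum>j<n. cnj (f i) * B $$ (i,j) * f j - (if j = k then cnj (f i) * B $$ (i,k) * c else 0)
       - (if i = k then cnj c * B $$ (k,j) * f j else 0) + (if i = k then if j = k then cnj c * d * c else 0 else 0))"
    unfolding qform_def d_def by (intro sum.cong refl) (auto simp: algebra_simps)
  also have "\<dots> = qform n B f - \<gamma> * c - cnj c * \<beta> + cnj c * d * c"
    unfolding qform_def \<gamma>_def \<beta>_def using k
    by (simp add: sum.distrib sum_subtractf sum_distrib_left sum_distrib_right mult.assoc sum_if_const)
  finally have rhs: "qform n B (\<lambda>a. f a - (if a = k then c else 0)) = qform n B f - \<gamma> * c - cnj c * \<beta> + cnj c * d * c" .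
  have "cnj c * d * c = cnj c * \<beta>"
    unfolding c_def using d by (simp add: d_def)
  then show ?thesis
    using lhs rhs d unfolding c_def \<beta>_def[symmetric] d_def[symmetric] by simp
qed

lemma psd_schur_compl:
  assumes B: "psd n B" and k: "k < n" and d: "B $$ (k,k) \<noteq> 0"
  shows "psd n (schur_compl n B k)"
proof -
  have real: "cnj (B $$ (k,k)) = B $$ (k,k)"
    using psd_diag(1)[OF B k] by (simp add: complex_eq_iff)
  show ?thesis
    unfolding psd_iff_qform qform_schur_compl[OF k d real] using psd_qform[OF B]
    by (simp add: schur_compl_def)
qed

definition trace_prod :: "nat \<Rightarrow> complex mat \<Rightarrow> complex mat \<Rightarrow> complex" where
  "trace_prod n A B = (\<Sum>i<n. \<Sum>j<n. A $$ (i,j) * B $$ (j,i))"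

lemma trace_prod_schur_compl:
  assumes B: "psd n B" and k: "k < n"
  shows "trace_prod n A B = trace_prod n A (schur_compl n B k) + qform n A (\<lambda>j. B $$ (j,k)) / B $$ (k,k)"
proof -
  let ?d = "B $$ (k,k)"
  have "qform n A (\<lambda>j. B $$ (j,k)) = (\<Sum>i<n. \<Sum>j<n. A $$ (i,j) * B $$ (j,k) * B $$ (k,i))"
    unfolding qform_def using psd_hermitian_entry[OF B _ k] by (intro sum.cong refl) auto
  moreover have "trace_prod n A (schur_compl n B k) =
      (\<Sum>i<n. \<Sum>j<n. A $$ (i,j) * B $$ (j,i) - A $$ (i,j) * B $$ (j,k) * B $$ (k,i) / ?d)"
    unfolding trace_prod_def schur_compl_def
    by (intro sum.cong refl) (auto simp: algebra_simps diff_divide_distrib)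
  ultimately show ?thesis
    unfolding trace_prod_def by (simp add: sum_divide_distrib sum_subtractf)
qed

lemma schur_compl_zero_pattern:
  assumes "\<And>i j. i < n \<Longrightarrow> j < n \<Longrightarrow> i < k \<or> j < k \<Longrightarrow> B $$ (i,j) = 0" "k < n" "B $$ (k,k) \<noteq> 0"
    and "i < n" "j < n" "i \<le> k \<or> j \<le> k"
  shows "schur_compl n B k $$ (i,j) = 0"
proof -
  consider "i < k" | "j < k" | "i = k" | "j = k"
    using assms(6) by linarith
  then show ?thesis
    using assms(1-5) by cases (auto simp: schur_compl_def)
qed

text \<open>Induction on the size \<open>m\<close> of the trailing block outside which \<open>B\<close> vanishes: each step
  splits off the rank-one part of the first row and column of that block by a Schur complement.\<close>

lemma trace_prod_psd_nonneg_block: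
  assumes A: "psd n A"
  shows "psd n B \<Longrightarrow> (\<And>i j. i < n \<Longrightarrow> j < n \<Longrightarrow> i < n - m \<or> j < n - m \<Longrightarrow> B $$ (i,j) = 0)
    \<Longrightarrow> Re (trace_prod n A B) \<ge> 0"
proof (induction m arbitrary: B)
  case 0
  then show ?case by (simp add: trace_prod_def)
next
  case (Suc m)
  show ?case
  proof (cases "n \<le> m")
    case True
    then show ?thesis using Suc by simp
  next
    case False
    define k where "k = n - Suc m"
    have k: "k < n" "Suc k = n - m"
      using False unfolding k_def by auto
    have zero: "\<And>i j. i < n \<Longrightarrow> j < n \<Longrightarrow> i < k \<or> j < k \<Longrightarrow> B $$ (i,j) = 0"
      using Suc.prems(2) unfolding k_def by blast
    show ?thesis
    proof (cases "B $$ (k,k) = 0")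
      case True
      have "B $$ (i,j) = 0" if "i < n" "j < n" "i < n - m \<or> j < n - m" for i j
        using zero[OF that(1,2)] psd_zero_diag[OF Suc.prems(1) k(1) _ True] that k(2)
        by (metis less_Suc_eq)
      then show ?thesis using Suc.IH[OF Suc.prems(1)] by blast
    next
      case False
      have "Re (trace_prod n A (schur_compl n B k)) \<ge> 0"
        using Suc.IH[OF psd_schur_compl[OF Suc.prems(1) k(1) False]]
          schur_compl_zero_pattern[OF zero k(1) False] k(2) by (metis less_Suc_eq_le)
      moreover have "Re (qform n A (\<lambda>j. B $$ (j,k)) / B $$ (k,k)) \<ge> 0"
      proof -
        have "B $$ (k,k) = of_real (Re (B $$ (k,k)))" "Re (B $$ (k,k)) \<ge> 0"
          using psd_diag[OF Suc.prems(1) k(1)] by (auto simp: complex_eq_iff)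
        then show ?thesis
          using psd_qform[OF A, of "\<lambda>j. B $$ (j,k)"] by (metis Re_divide_of_real divide_nonneg_nonneg)
      qed
      ultimately show ?thesis
        unfolding trace_prod_schur_compl[OF Suc.prems(1) k(1)] by simp
    qed
  qed
qed

lemma trace_prod_psd_nonneg:
  assumes "psd n A" "psd n B"
  shows "Re (trace_prod n A B) \<ge> 0"
  using trace_prod_psd_nonneg_block[OF assms(1,2), of n] by simp

lemma density_psd: "density n \<sigma> \<Longrightarrow> psd n \<sigma>"
  unfolding density_def by auto

lemma density_carrier: "density n \<sigma> \<Longrightarrow> \<sigma> \<in> carrier_mat n n"
  using density_psd psd_carrier by blast

lemma density_trace: "density n \<sigma> \<Longrightarrow> (\<Sum>i<n. \<sigma> $$ (i,i)) = 1"
  using density_carrier unfolding density_def mtr_def by auto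

lemma density_entry_le_1:
  assumes "density n \<sigma>" "i < n" "j < n"
  shows "cmod (\<sigma> $$ (i,j)) \<le> 1"
proof -
  have P: "psd n \<sigma>"
    using density_psd[OF assms(1)] .
  have "(\<Sum>k<n. Re (\<sigma> $$ (k,k))) = 1"
    using arg_cong[OF density_trace[OF assms(1)], of Re] by (simp add: Re_sum)
  then have diag: "Re (\<sigma> $$ (k,k)) \<le> 1" if "k < n" for k
    using member_le_sum[of k "{..<n}" "\<lambda>k. Re (\<sigma> $$ (k,k))"] psd_diag(2)[OF P] that by auto
  show ?thesis
    using psd_offdiag_le[OF P assms(2,3)] diag[OF assms(2)] diag[OF assms(3)] by argo
qed

lemma mtr_mult:
  assumes "A \<in> carrier_mat m m" "B \<in> carrier_mat m m"
  shows "mtr (A * B) = trace_prod m A B"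
  unfolding mtr_def trace_prod_def using assms
  by (auto simp: scalar_prod_def lessThan_atLeast0 intro!: sum.cong)

lemma mtr_add:
  assumes "A \<in> carrier_mat m m" "B \<in> carrier_mat m m"
  shows "mtr (A + B) = mtr A + mtr B"
  unfolding mtr_def using assms by (auto simp: sum.distrib)

lemma mtr_smult:
  assumes "A \<in> carrier_mat m m"
  shows "mtr (c \<cdot>\<^sub>m A) = c * mtr A"
  unfolding mtr_def using assms by (auto simp: sum_distrib_left intro!: sum.cong)

lemma ampl_1:
  assumes "X \<in> carrier_mat n n" "\<Lambda> X \<in> carrier_mat m m"
  shows "ampl 1 n m \<Lambda> X = \<Lambda> X"
proof -
  have "mat n n (\<lambda>(i,j). X $$ (0 * n + i, 0 * n + j)) = X"
    using assms(1) by (intro eq_matI) auto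
  then show ?thesis
    unfolding ampl_def using assms(2) by (intro eq_matI) auto
qed

lemma channel_psd:
  assumes "channel n m \<Lambda>" "psd n X"
  shows "psd m (\<Lambda> X)"
proof -
  have X: "X \<in> carrier_mat n n"
    using psd_carrier[OF assms(2)] .
  have "\<Lambda> X \<in> carrier_mat m m"
    using assms(1) X unfolding channel_def by auto
  moreover have "psd (1*m) (ampl 1 n m \<Lambda> X)"
    using assms unfolding channel_def compl_pos_def by (metis mult_1)
  ultimately show ?thesis
    using ampl_1[OF X] by simp
qed

lemma channel_id: "channel n n (\<lambda>X. X)"
  unfolding channel_def lin_map_def compl_pos_def
proof (intro conjI ballI allI impI)
  fix k X
  assume X: "psd (k*n) X"
  have "ampl k n n (\<lambda>X. X) X = X"
  proof (rule eq_matI)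
    fix r c
    assume "r < dim_row X" "c < dim_col X"
    then have rc: "r < k * n" "c < k * n"
      using psd_carrier[OF X] by auto
    then have "n > 0"
      by (cases "n = 0") auto
    then have "r div n * n + r mod n = r" "c div n * n + c mod n = c" "r mod n < n" "c mod n < n"
      by simp_all
    then show "ampl k n n (\<lambda>X. X) X $$ (r, c) = X $$ (r, c)"
      unfolding ampl_def using rc by simp
  qed (use psd_carrier[OF X] in \<open>auto simp: ampl_def\<close>)
  then show "psd (k*n) (ampl k n n (\<lambda>X. X) X)"
    using X by simp
qed auto

lemma tasksD:
  assumes "(N, p, \<Lambda>, M) \<in> tasks n"
  obtains m where "\<And>i. i < N \<Longrightarrow> p i \<ge> 0" "\<And>i. i < N \<Longrightarrow> channel n m (\<Lambda> i)"
    "\<And>i. i < N \<Longrightarrow> psd m (M i)"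
  using assms unfolding tasks_def ensemble_def povm_def by auto

lemma p_err_nonneg:
  assumes "T \<in> tasks n" "psd n X"
  shows "p_err T X \<ge> 0"
proof -
  obtain N p \<Lambda> M where T: "T = (N, p, \<Lambda>, M)"
    by (cases T) auto
  obtain m where p: "\<And>i. i < N \<Longrightarrow> p i \<ge> 0" and \<Lambda>: "\<And>i. i < N \<Longrightarrow> channel n m (\<Lambda> i)"
    and M: "\<And>i. i < N \<Longrightarrow> psd m (M i)"
    using tasksD assms(1) unfolding T by metis
  have "Re (mtr (M i * \<Lambda> i X)) \<ge> 0" if i: "i < N" for i
  proof -
    have P: "psd m (\<Lambda> i X)"
      using channel_psd \<Lambda>[OF i] assms(2) by blast
    show ?thesis
      using trace_prod_psd_nonneg[OF M[OF i] P] mtr_mult[OF psd_carrier[OF M[OF i]] psd_carrier[OF P]]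
      by simp
  qed
  then show ?thesis
    unfolding T p_err_def using p by (auto intro: sum_nonneg)
qed

lemma p_err_linear:
  assumes "T \<in> tasks n" "A \<in> carrier_mat n n" "B \<in> carrier_mat n n"
  shows "p_err T (complex_of_real a \<cdot>\<^sub>m A + complex_of_real b \<cdot>\<^sub>m B) = a * p_err T A + b * p_err T B"
proof -
  obtain N p \<Lambda> M where T: "T = (N, p, \<Lambda>, M)"
    by (cases T) auto
  obtain m where \<Lambda>: "\<And>i. i < N \<Longrightarrow> channel n m (\<Lambda> i)" and M: "\<And>i. i < N \<Longrightarrow> psd m (M i)"
    using tasksD assms(1) unfolding T by metis
  let ?a = "complex_of_real a" and ?b = "complex_of_real b"
  have "mtr (M i * \<Lambda> i (?a \<cdot>\<^sub>m A + ?b \<cdot>\<^sub>m B)) = ?a * mtr (M i * \<Lambda> i A) + ?b * mtr (M i * \<Lambda> i B)"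
    if i: "i < N" for i
  proof -
    have Mi: "M i \<in> carrier_mat m m"
      using psd_carrier[OF M[OF i]] .
    have LA: "\<Lambda> i A \<in> carrier_mat m m" "\<Lambda> i B \<in> carrier_mat m m"
      using \<Lambda>[OF i] assms(2,3) unfolding channel_def by auto
    have "M i * \<Lambda> i (?a \<cdot>\<^sub>m A + ?b \<cdot>\<^sub>m B) = M i * (?a \<cdot>\<^sub>m \<Lambda> i A + ?b \<cdot>\<^sub>m \<Lambda> i B)"
      using \<Lambda>[OF i] assms(2,3) unfolding channel_def lin_map_def by simp
    also have "M i * (?a \<cdot>\<^sub>m \<Lambda> i A + ?b \<cdot>\<^sub>m \<Lambda> i B) = M i * (?a \<cdot>\<^sub>m \<Lambda> i A) + M i * (?b \<cdot>\<^sub>m \<Lambda> i B)"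
      using Mi LA by (intro mult_add_distrib_mat) auto
    finally have "M i * \<Lambda> i (?a \<cdot>\<^sub>m A + ?b \<cdot>\<^sub>m B) = ?a \<cdot>\<^sub>m (M i * \<Lambda> i A) + ?b \<cdot>\<^sub>m (M i * \<Lambda> i B)"
      using mult_smult_distrib[OF Mi LA(1)] mult_smult_distrib[OF Mi LA(2)] by simp
    then show ?thesis
      using Mi LA by (simp add: mtr_add[of _ m] mtr_smult[of _ m])
  qed
  then show ?thesis
    unfolding T p_err_def by (simp add: sum_distrib_left sum.distrib algebra_simps)
qed

text \<open>All weight sits on outcome \<open>0\<close> of the POVM \<open>{Y, 1 - Y}\<close> after the identity channel,
  so the error probability is \<open>tr(Y X)\<close>.\<close>

definition test_task :: "nat \<Rightarrow> complex mat \<Rightarrow> task" where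
  "test_task n Y = (2, (\<lambda>i. if i = 0 then 1 else 0), (\<lambda>i X. X), (\<lambda>i. if i = 0 then Y else 1\<^sub>m n - Y))"

lemma test_task_in_tasks:
  assumes "psd n Y" "psd n (1\<^sub>m n - Y)"
  shows "test_task n Y \<in> tasks n"
  unfolding tasks_def test_task_def
proof (simp, intro exI conjI)
  show "ensemble n n 2 (\<lambda>i. if i = 0 then 1 else 0) (\<lambda>i X. X)"
    unfolding ensemble_def using channel_id by (simp add: numeral_2_eq_2)
  show "povm n 2 (\<lambda>i. if i = 0 then Y else 1\<^sub>m n - Y)"
    unfolding povm_def using assms psd_carrier[OF assms(1)] by (auto simp: numeral_2_eq_2 less_Suc_eq)
qed

lemma p_err_test_task: "p_err (test_task n Y) X = Re (mtr (Y * X))"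
  unfolding p_err_def test_task_def by (simp add: numeral_2_eq_2)

lemma qform_one: "qform n (1\<^sub>m n) f = (\<Sum>i<n. of_real ((cmod (f i))^2))"
  unfolding qform_def by (intro sum.cong refl) (simp add: if_zero_simps cnj_mult_self)

lemma psd_one: "psd n (1\<^sub>m n)"
  unfolding psd_iff_qform qform_one by (auto intro: sum_nonneg)

lemma psd_zero: "psd n (0\<^sub>m n n)"
  unfolding psd_iff_qform qform_def by simp

lemma test_task_one_in_tasks: "test_task n (1\<^sub>m n) \<in> tasks n"
proof (rule test_task_in_tasks[OF psd_one])
  have zero: "1\<^sub>m n - 1\<^sub>m n = (0\<^sub>m n n :: complex mat)"
    by (intro eq_matI) auto
  show "psd n (1\<^sub>m n - 1\<^sub>m n)"
    unfolding zero by (rule psd_zero)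
qed

lemma p_err_test_task_one:
  assumes "density n \<omega>"
  shows "p_err (test_task n (1\<^sub>m n)) \<omega> = 1"
  using assms density_carrier[OF assms] unfolding p_err_test_task density_def by simp

definition hs_inner :: "nat \<Rightarrow> complex mat \<Rightarrow> complex mat \<Rightarrow> real" where
  "hs_inner n A B = Re (\<Sum>i<n. \<Sum>j<n. A $$ (i,j) * cnj (B $$ (i,j)))"

definition hermitian :: "nat \<Rightarrow> complex mat \<Rightarrow> bool" where
  "hermitian n A \<longleftrightarrow> (\<forall>i<n. \<forall>j<n. A $$ (j,i) = cnj (A $$ (i,j)))"

lemma hermitianD: "hermitian n A \<Longrightarrow> i < n \<Longrightarrow> j < n \<Longrightarrow> cnj (A $$ (i,j)) = A $$ (j,i)"
  unfolding hermitian_def by (metis complex_cnj_cnj)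

lemma psd_hermitian: "psd n A \<Longrightarrow> hermitian n A"
  unfolding hermitian_def using psd_hermitian_entry by blast

lemma hermitian_qform_real:
  assumes "hermitian n A"
  shows "Im (qform n A f) = 0"
proof -
  have "cnj (qform n A f) = (\<Sum>i<n. \<Sum>j<n. f i * cnj (A $$ (i,j)) * cnj (f j))"
    unfolding qform_def by simp
  also have "\<dots> = (\<Sum>i<n. \<Sum>j<n. f i * A $$ (j,i) * cnj (f j))"
    using hermitianD[OF assms] by (intro sum.cong refl) auto
  also have "\<dots> = (\<Sum>j<n. \<Sum>i<n. f i * A $$ (j,i) * cnj (f j))"
    by (rule sum.swap)
  also have "\<dots> = qform n A f"
    unfolding qform_def by (intro sum.cong refl) (simp add: algebra_simps)
  finally show ?thesis
    by (metis Reals_cnj_iff complex_is_Real_iff)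
qed

definition outer :: "nat \<Rightarrow> (nat \<Rightarrow> complex) \<Rightarrow> complex mat" where
  "outer n f = mat n n (\<lambda>(i,j). f i * cnj (f j))"

lemma psd_outer: "psd n (outer n f)"
  unfolding psd_iff_qform
proof (intro conjI allI)
  fix g
  define w where "w = (\<Sum>i<n. cnj (g i) * f i)"
  have "qform n (outer n f) g = (\<Sum>i<n. \<Sum>j<n. (cnj (g i) * f i) * (cnj (f j) * g j))"
    unfolding qform_def outer_def by (intro sum.cong refl) (simp add: algebra_simps)
  also have "\<dots> = cnj w * w"
    unfolding w_def by (simp add: sum_product mult.commute)
  finally show "Im (qform n (outer n f) g) = 0" "Re (qform n (outer n f) g) \<ge> 0"
    unfolding cnj_mult_self by auto
qed (simp add: outer_def)

lemma hs_inner_outer: "hs_inner n Y (outer n f) = Re (qform n Y f)"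
  unfolding hs_inner_def qform_def outer_def by (simp add: algebra_simps)

lemma psd_if_hs_inner_nonneg:
  assumes "Y \<in> carrier_mat n n" "hermitian n Y" "\<And>Q. psd n Q \<Longrightarrow> hs_inner n Y Q \<ge> 0"
  shows "psd n Y"
  unfolding psd_iff_qform
  using assms hermitian_qform_real[OF assms(2)] assms(3)[OF psd_outer] hs_inner_outer by auto

lemma Re_mtr_mult_hermitian:
  assumes "A \<in> carrier_mat n n" "B \<in> carrier_mat n n" "hermitian n B"
  shows "Re (mtr (A * B)) = hs_inner n A B"
  unfolding mtr_mult[OF assms(1,2)] trace_prod_def hs_inner_def using hermitianD[OF assms(3)]
  by (intro arg_cong[where f=Re] sum.cong refl) auto

lemma psd_smult:
  assumes "psd n A" "c \<ge> 0"
  shows "psd n (complex_of_real c \<cdot>\<^sub>m A)"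
proof -
  have A: "A \<in> carrier_mat n n"
    using psd_carrier[OF assms(1)] .
  have "qform n (complex_of_real c \<cdot>\<^sub>m A) f = of_real c * qform n A f" for f
    unfolding qform_def sum_distrib_left using A by (intro sum.cong refl) (auto simp: algebra_simps)
  then show ?thesis
    unfolding psd_iff_qform using A psd_qform[OF assms(1)] assms(2) by auto
qed

lemma hs_inner_smult_left:
  assumes "Y \<in> carrier_mat n n"
  shows "hs_inner n (complex_of_real c \<cdot>\<^sub>m Y) B = c * hs_inner n Y B"
proof -
  have "(\<Sum>i<n. \<Sum>j<n. (complex_of_real c \<cdot>\<^sub>m Y) $$ (i,j) * cnj (B $$ (i,j))) =
      of_real c * (\<Sum>i<n. \<Sum>j<n. Y $$ (i,j) * cnj (B $$ (i,j)))"
    unfolding sum_distrib_left using assms by (intro sum.cong refl) (auto simp: algebra_simps)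
  then show ?thesis
    unfolding hs_inner_def by simp
qed

lemma Re_qform_le:
  "Re (qform n Y f) \<le> (\<Sum>i<n. \<Sum>j<n. cmod (Y $$ (i,j))) * (\<Sum>i<n. (cmod (f i))^2)"
proof -
  define N2 where "N2 = (\<Sum>i<n. (cmod (f i))^2)"
  have sq: "(cmod (f i))^2 \<le> N2" if "i < n" for i
    unfolding N2_def by (rule member_le_sum) (use that in auto)
  have prod: "cmod (f i) * cmod (f j) \<le> N2" if "i < n" "j < n" for i j
  proof -
    have "cmod (f i) * cmod (f j) \<le> ((cmod (f i))^2 + (cmod (f j))^2) / 2"
      using zero_le_power2[of "cmod (f i) - cmod (f j)"] unfolding power2_diff by (simp add: field_simps)
    then show ?thesis
      using sq[OF that(1)] sq[OF that(2)] by simp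
  qed
  have "Re (qform n Y f) \<le> cmod (qform n Y f)"
    by (rule complex_Re_le_cmod)
  also have "\<dots> \<le> (\<Sum>i<n. \<Sum>j<n. cmod (cnj (f i) * Y $$ (i,j) * f j))"
    unfolding qform_def by (rule order_trans[OF norm_sum sum_mono[OF norm_sum]])
  also have "\<dots> \<le> (\<Sum>i<n. \<Sum>j<n. cmod (Y $$ (i,j)) * N2)"
  proof (intro sum_mono)
    fix i j
    assume "i \<in> {..<n}" "j \<in> {..<n}"
    then have "cmod (Y $$ (i,j)) * (cmod (f i) * cmod (f j)) \<le> cmod (Y $$ (i,j)) * N2"
      using prod by (simp add: mult_left_mono)
    then show "cmod (cnj (f i) * Y $$ (i,j) * f j) \<le> cmod (Y $$ (i,j)) * N2"
      by (simp add: norm_mult algebra_simps)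
  qed
  also have "\<dots> = (\<Sum>i<n. \<Sum>j<n. cmod (Y $$ (i,j))) * N2"
    by (simp add: sum_distrib_right)
  finally show ?thesis
    unfolding N2_def .
qed

lemma psd_one_minus_smult:
  assumes Y: "psd n Y"
  obtains c where "c > 0" "psd n (1\<^sub>m n - complex_of_real c \<cdot>\<^sub>m Y)"
proof -
  define S where "S = (\<Sum>i<n. \<Sum>j<n. cmod (Y $$ (i,j)))"
  have "S \<ge> 0"
    unfolding S_def by (intro sum_nonneg) auto
  define c where "c = 1 / (S + 1)"
  have c: "c > 0" "c * S \<le> 1"
    unfolding c_def using \<open>S \<ge> 0\<close> by (auto simp: field_simps)
  have Yc: "Y \<in> carrier_mat n n"
    using psd_carrier[OF Y] .
  have "psd n (1\<^sub>m n - complex_of_real c \<cdot>\<^sub>m Y)"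
    unfolding psd_iff_qform
  proof (intro conjI allI)
    show "1\<^sub>m n - complex_of_real c \<cdot>\<^sub>m Y \<in> carrier_mat n n"
      by (rule minus_carrier_mat) (use Yc in simp)
    fix f
    let ?N2 = "\<Sum>i<n. (cmod (f i))^2"
    have "qform n (1\<^sub>m n - complex_of_real c \<cdot>\<^sub>m Y) f =
        (\<Sum>i<n. \<Sum>j<n. cnj (f i) * 1\<^sub>m n $$ (i,j) * f j - complex_of_real c * (cnj (f i) * Y $$ (i,j) * f j))"
      unfolding qform_def using Yc by (intro sum.cong refl) (auto simp: algebra_simps)
    then have split: "qform n (1\<^sub>m n - complex_of_real c \<cdot>\<^sub>m Y) f = qform n (1\<^sub>m n) f - complex_of_real c * qform n Y f"
      unfolding qform_def by (simp only: sum_subtractf sum_distrib_left)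
    have one: "Im (qform n (1\<^sub>m n) f) = 0" "Re (qform n (1\<^sub>m n) f) = ?N2"
      unfolding qform_one by (simp_all add: Im_sum Re_sum)
    show "Im (qform n (1\<^sub>m n - complex_of_real c \<cdot>\<^sub>m Y) f) = 0"
      unfolding split using one psd_qform[OF Y] by simp
    have "c * Re (qform n Y f) \<le> c * S * ?N2"
      using Re_qform_le[of n Y f] c unfolding S_def by (simp add: mult_left_mono mult.assoc)
    also have "\<dots> \<le> ?N2"
      using mult_right_mono[OF c(2), of ?N2] by (simp add: sum_nonneg)
    finally show "Re (qform n (1\<^sub>m n - complex_of_real c \<cdot>\<^sub>m Y) f) \<ge> 0"
      unfolding split using one by simp
  qed
  with c(1) show ?thesis
    by (rule that)
qed

lemma hs_inner_self: "hs_inner n A A = (\<Sum>i<n. \<Sum>j<n. (cmod (A $$ (i,j)))^2)"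
  unfolding hs_inner_def by (simp add: cmod_power2 flip: power2_eq_square)

lemma hs_inner_self_nonneg: "hs_inner n A A \<ge> 0"
  unfolding hs_inner_self by (intro sum_nonneg) auto

lemma entry_sq_le_hs_inner_self:
  assumes "i < n" "j < n"
  shows "(cmod (A $$ (i,j)))^2 \<le> hs_inner n A A"
proof -
  have "(cmod (A $$ (i,j)))^2 \<le> (\<Sum>j<n. (cmod (A $$ (i,j)))^2)"
    by (rule member_le_sum) (use assms in auto)
  also have "\<dots> \<le> (\<Sum>i<n. \<Sum>j<n. (cmod (A $$ (i,j)))^2)"
    by (rule member_le_sum[of i "{..<n}" "\<lambda>i. \<Sum>j<n. (cmod (A $$ (i,j)))^2"])
      (use assms in \<open>auto intro: sum_nonneg\<close>)
  finally show ?thesis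
    unfolding hs_inner_self .
qed

lemma hs_inner_self_eq_0_entry: "hs_inner n A A = 0 \<Longrightarrow> i < n \<Longrightarrow> j < n \<Longrightarrow> A $$ (i,j) = 0"
  using entry_sq_le_hs_inner_self[of i n j A] by simp

lemma hs_inner_add_right:
  assumes "\<And>i j. i < n \<Longrightarrow> j < n \<Longrightarrow> C $$ (i,j) = A $$ (i,j) + of_real c * B $$ (i,j)"
  shows "hs_inner n Z C = hs_inner n Z A + c * hs_inner n Z B"
proof -
  have "(\<Sum>i<n. \<Sum>j<n. Z $$ (i,j) * cnj (C $$ (i,j))) =
      (\<Sum>i<n. \<Sum>j<n. Z $$ (i,j) * cnj (A $$ (i,j)) + of_real c * (Z $$ (i,j) * cnj (B $$ (i,j))))"
    using assms by (intro sum.cong refl) (auto simp: algebra_simps)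
  then show ?thesis
    unfolding hs_inner_def by (simp add: sum.distrib sum_distrib_left distrib_left)
qed

lemma hs_inner_self_add:
  assumes "\<And>i j. i < n \<Longrightarrow> j < n \<Longrightarrow> C $$ (i,j) = A $$ (i,j) + of_real c * B $$ (i,j)"
  shows "hs_inner n C C = hs_inner n A A + 2 * c * hs_inner n A B + c^2 * hs_inner n B B"
proof -
  have "(\<Sum>i<n. \<Sum>j<n. Re (C $$ (i,j) * cnj (C $$ (i,j)))) =
      (\<Sum>i<n. \<Sum>j<n. Re (A $$ (i,j) * cnj (A $$ (i,j))) + 2 * c * Re (A $$ (i,j) * cnj (B $$ (i,j)))
        + c^2 * Re (B $$ (i,j) * cnj (B $$ (i,j))))"
    using assms by (intro sum.cong refl) (auto simp: algebra_simps power2_eq_square)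
  then show ?thesis
    unfolding hs_inner_def by (simp add: sum.distrib sum_distrib_left distrib_left)
qed

lemma hs_inner_uminus_left:
  assumes "\<And>i j. i < n \<Longrightarrow> j < n \<Longrightarrow> Y $$ (i,j) = - Z $$ (i,j)"
  shows "hs_inner n Y Q = - hs_inner n Z Q"
proof -
  have "(\<Sum>i<n. \<Sum>j<n. Y $$ (i,j) * cnj (Q $$ (i,j))) = - (\<Sum>i<n. \<Sum>j<n. Z $$ (i,j) * cnj (Q $$ (i,j)))"
    unfolding sum_negf[symmetric] using assms by (intro sum.cong refl) auto
  then show ?thesis
    unfolding hs_inner_def by simp
qed

lemma nonneg_if_quadratic_nonneg:
  fixes a b :: real
  assumes "b \<ge> 0" "\<And>\<theta>. 0 < \<theta> \<Longrightarrow> \<theta> \<le> 1 \<Longrightarrow> 2 * \<theta> * a + \<theta>^2 * b \<ge> 0"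
  shows "a \<ge> 0"
proof (rule ccontr)
  assume "\<not> a \<ge> 0"
  then have a: "a < 0" by simp
  define \<theta> where "\<theta> = min 1 (- a / (b + 1))"
  have "0 < - a / (b + 1)"
    using a assms(1) by (intro divide_pos_pos) auto
  then have \<theta>: "0 < \<theta>" "\<theta> \<le> 1"
    unfolding \<theta>_def by auto
  have "\<theta> \<le> - a / (b + 1)"
    unfolding \<theta>_def by simp
  then have "\<theta> * (b + 1) \<le> - a"
    using assms(1) by (simp add: field_simps)
  then have "2 * a + \<theta> * b < 0"
    using a \<theta> by (simp add: algebra_simps)
  then have "\<theta> * (2 * a + \<theta> * b) < 0"
    using \<theta> by (simp add: mult_pos_neg)
  then show False
    using assms(2)[OF \<theta>] by (simp add: algebra_simps power2_eq_square)
qed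

lemma psd_limit:
  assumes "\<And>t. psd n (X t)" "\<And>i j. i < n \<Longrightarrow> j < n \<Longrightarrow> (\<lambda>t. X t $$ (i,j)) \<longlonglongrightarrow> L (i,j)"
  shows "psd n (mat n n L)"
  unfolding psd_iff_qform
proof (intro conjI allI)
  fix f
  have "(\<lambda>t. qform n (X t) f) \<longlonglongrightarrow> qform n (mat n n L) f"
    unfolding qform_def by (intro tendsto_sum tendsto_mult tendsto_const) (use assms(2) in auto)
  then have Im: "(\<lambda>t. Im (qform n (X t) f)) \<longlonglongrightarrow> Im (qform n (mat n n L) f)"
    and Re: "(\<lambda>t. Re (qform n (X t) f)) \<longlonglongrightarrow> Re (qform n (mat n n L) f)"
    by (auto intro: tendsto_Im tendsto_Re)
  show "Im (qform n (mat n n L) f) = 0"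
    using LIMSEQ_unique[OF Im] psd_qform[OF assms(1)] by simp
  show "Re (qform n (mat n n L) f) \<ge> 0"
    by (rule LIMSEQ_le_const[OF Re]) (use psd_qform[OF assms(1)] in auto)
qed simp

lemma psd_conic_comb:
  assumes "psd n A" "psd n B" "a \<ge> 0" "b \<ge> 0"
  shows "psd n (mat n n (\<lambda>(i,j). of_real a * A $$ (i,j) + of_real b * B $$ (i,j)))"
proof -
  have "qform n (mat n n (\<lambda>(i,j). of_real a * A $$ (i,j) + of_real b * B $$ (i,j))) f =
      of_real a * qform n A f + of_real b * qform n B f" for f
    unfolding qform_def by (simp add: sum.distrib sum_distrib_left algebra_simps)
  then show ?thesis
    unfolding psd_iff_qform using psd_qform[OF assms(1)] psd_qform[OF assms(2)] assms(3,4) by auto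
qed

lemma bounded_family_convergent_subseq:
  fixes X :: "nat \<Rightarrow> 'a \<Rightarrow> complex"
  assumes "finite I" "\<And>t i. i \<in> I \<Longrightarrow> cmod (X t i) \<le> B"
  shows "\<exists>r L. strict_mono r \<and> (\<forall>i\<in>I. (\<lambda>t. X (r t) i) \<longlonglongrightarrow> L i)"
  using assms
proof (induction I rule: finite_induct)
  case empty
  show ?case
    using strict_mono_id by blast
next
  case (insert a I)
  then obtain r L where r: "strict_mono r" and L: "\<forall>i\<in>I. (\<lambda>t. X (r t) i) \<longlonglongrightarrow> L i"
    by auto
  have "bounded (range (\<lambda>t. X (r t) a))"
    by (rule bounded_subset[OF bounded_cball[of 0 B]]) (use insert.prems in auto)
  then obtain l r2 where r2: "strict_mono r2" and l: "((\<lambda>t. X (r t) a) \<circ> r2) \<longlonglongrightarrow> l"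
    using bounded_imp_convergent_subsequence by blast
  have "(\<lambda>t. X ((r \<circ> r2) t) i) \<longlonglongrightarrow> (L(a := l)) i" if i: "i \<in> insert a I" for i
  proof (cases "i = a")
    case True
    then show ?thesis using l by (simp add: o_def)
  next
    case False
    then have "((\<lambda>t. X (r t) i) \<circ> r2) \<longlonglongrightarrow> L i"
      using i L LIMSEQ_subseq_LIMSEQ r2 by blast
    then show ?thesis
      using False by (simp add: o_def)
  qed
  then show ?case
    using strict_mono_o[OF r r2] by blast
qed

text \<open>Points of the set \<open>\<rho> - t F - PSD\<close>; its point nearest to \<open>0\<close> gives the separating observable.\<close>

definition resid :: "nat \<Rightarrow> complex mat \<Rightarrow> real \<Rightarrow> complex mat \<Rightarrow> complex mat \<Rightarrow> complex mat" where
  "resid n \<rho> t \<sigma> P = mat n n (\<lambda>(i,j). \<rho> $$ (i,j) - of_real t * \<sigma> $$ (i,j) - P $$ (i,j))"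

lemma resid_index [simp]:
  "i < n \<Longrightarrow> j < n \<Longrightarrow> resid n \<rho> t \<sigma> P $$ (i,j) = \<rho> $$ (i,j) - of_real t * \<sigma> $$ (i,j) - P $$ (i,j)"
  unfolding resid_def by simp

lemma resid_entry_bound:
  assumes rho: "density n \<rho>" and sigma: "density n \<sigma>"
    and bound: "hs_inner n (resid n \<rho> t \<sigma> P) (resid n \<rho> t \<sigma> P) \<le> C"
    and ij: "i < n" "j < n"
  shows "cmod (P $$ (i,j)) \<le> 1 + \<bar>t\<bar> + (1 + C)"
proof -
  let ?g = "resid n \<rho> t \<sigma> P $$ (i,j)"
  have "cmod ?g \<le> 1 + (cmod ?g)^2"
    using zero_le_power2[of "cmod ?g - 1/2"] unfolding power2_diff by (simp add: field_simps)
  also have "\<dots> \<le> 1 + C"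
    using order_trans[OF entry_sq_le_hs_inner_self[OF ij] bound] by simp
  finally have g: "cmod ?g \<le> 1 + C" .
  have "\<bar>t\<bar> * cmod (\<sigma> $$ (i,j)) \<le> \<bar>t\<bar>"
    using density_entry_le_1[OF sigma ij] by (simp add: mult_left_le)
  moreover have "cmod (P $$ (i,j)) \<le> cmod (\<rho> $$ (i,j)) + \<bar>t\<bar> * cmod (\<sigma> $$ (i,j)) + cmod ?g"
  proof -
    have "P $$ (i,j) = \<rho> $$ (i,j) - of_real t * \<sigma> $$ (i,j) - ?g"
      using ij by simp
    then show ?thesis
      using norm_triangle_ineq4[of "\<rho> $$ (i,j) - of_real t * \<sigma> $$ (i,j)" ?g]
        norm_triangle_ineq4[of "\<rho> $$ (i,j)" "of_real t * \<sigma> $$ (i,j)"]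
      by (simp add: norm_mult)
  qed
  ultimately show ?thesis
    using density_entry_le_1[OF rho ij] g by linarith
qed

lemma resid_bounded_convergent_subseq:
  fixes \<sigma>s Ps :: "nat \<Rightarrow> complex mat"
  assumes rho: "density n \<rho>" and F: "F \<subseteq> {\<sigma>. density n \<sigma>}" "closed_mats n F"
    and seq: "\<And>k. \<sigma>s k \<in> F" "\<And>k. psd n (Ps k)"
    and bound: "\<And>k. hs_inner n (resid n \<rho> t (\<sigma>s k) (Ps k)) (resid n \<rho> t (\<sigma>s k) (Ps k)) \<le> C"
  obtains r \<sigma>0 P0 where "strict_mono r" "\<sigma>0 \<in> F" "psd n P0"
    "\<And>i j. i < n \<Longrightarrow> j < n \<Longrightarrow> (\<lambda>k. \<sigma>s (r k) $$ (i,j)) \<longlonglongrightarrow> \<sigma>0 $$ (i,j)"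
    "\<And>i j. i < n \<Longrightarrow> j < n \<Longrightarrow> (\<lambda>k. Ps (r k) $$ (i,j)) \<longlonglongrightarrow> P0 $$ (i,j)"
proof -
  define I where "I = {..<n} \<times> {..<n}"
  have \<sigma>_bound: "cmod (\<sigma>s k $$ ij) \<le> 1" if "ij \<in> I" for k ij
    using density_entry_le_1[of n "\<sigma>s k" "fst ij" "snd ij"] seq(1)[of k] F(1) that
    unfolding I_def by auto
  have P_bound: "cmod (Ps k $$ ij) \<le> 1 + \<bar>t\<bar> + (1 + C)" if "ij \<in> I" for k ij
    using resid_entry_bound[OF rho _ bound[of k]] seq(1)[of k] F(1) that unfolding I_def by auto
  have I: "finite I"
    unfolding I_def by simp
  obtain r1 L\<sigma> where r1: "strict_mono r1" and L\<sigma>: "\<forall>ij\<in>I. (\<lambda>k. \<sigma>s (r1 k) $$ ij) \<longlonglongrightarrow> L\<sigma> ij"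
    using bounded_family_convergent_subseq[OF I, of "\<lambda>k ij. \<sigma>s k $$ ij" 1] \<sigma>_bound by blast
  obtain r2 LP where r2: "strict_mono r2" and LP: "\<forall>ij\<in>I. (\<lambda>k. Ps (r1 (r2 k)) $$ ij) \<longlonglongrightarrow> LP ij"
    using bounded_family_convergent_subseq[OF I, of "\<lambda>k ij. Ps (r1 k) $$ ij"] P_bound by blast
  define r where "r = r1 \<circ> r2"
  have r: "strict_mono r"
    unfolding r_def by (rule strict_mono_o[OF r1 r2])
  have \<sigma>_lim: "(\<lambda>k. \<sigma>s (r k) $$ (i,j)) \<longlonglongrightarrow> mat n n L\<sigma> $$ (i,j)" if "i < n" "j < n" for i j
  proof -
    have "((\<lambda>k. \<sigma>s (r1 k) $$ (i,j)) \<circ> r2) \<longlonglongrightarrow> L\<sigma> (i,j)"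
      using LIMSEQ_subseq_LIMSEQ[OF _ r2] L\<sigma> that unfolding I_def by blast
    then show ?thesis
      using that by (simp add: r_def o_def)
  qed
  have P_lim: "(\<lambda>k. Ps (r k) $$ (i,j)) \<longlonglongrightarrow> mat n n LP $$ (i,j)" if "i < n" "j < n" for i j
  proof -
    have "(\<lambda>k. Ps (r1 (r2 k)) $$ (i,j)) \<longlonglongrightarrow> LP (i,j)"
      using LP that unfolding I_def by blast
    then show ?thesis
      using that by (simp add: r_def)
  qed
  have closed: "\<And>X A. (\<forall>k. X k \<in> F) \<Longrightarrow> A \<in> carrier_mat n n \<Longrightarrow>
      (\<forall>i<n. \<forall>j<n. (\<lambda>k. X k $$ (i,j)) \<longlonglongrightarrow> A $$ (i,j)) \<Longrightarrow> A \<in> F"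
    using F(2) unfolding closed_mats_def by blast
  have "mat n n L\<sigma> \<in> F"
    by (rule closed[of "\<lambda>k. \<sigma>s (r k)"]) (use seq(1) \<sigma>_lim in auto)
  moreover have "psd n (mat n n LP)"
    by (rule psd_limit[of _ "\<lambda>k. Ps (r k)"]) (use seq(2) P_lim in auto)
  ultimately show ?thesis
    using that[OF r _ _ \<sigma>_lim P_lim] by blast
qed

lemma tendsto_hs_inner_self_resid:
  assumes "\<And>i j. i < n \<Longrightarrow> j < n \<Longrightarrow> (\<lambda>k. \<sigma>s k $$ (i,j)) \<longlonglongrightarrow> \<sigma> $$ (i,j)"
    and "\<And>i j. i < n \<Longrightarrow> j < n \<Longrightarrow> (\<lambda>k. Ps k $$ (i,j)) \<longlonglongrightarrow> P $$ (i,j)"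
  shows "(\<lambda>k. hs_inner n (resid n \<rho> t (\<sigma>s k) (Ps k)) (resid n \<rho> t (\<sigma>s k) (Ps k)))
    \<longlonglongrightarrow> hs_inner n (resid n \<rho> t \<sigma> P) (resid n \<rho> t \<sigma> P)"
  unfolding hs_inner_self
proof (intro tendsto_sum tendsto_power tendsto_norm)
  fix i j
  assume "i \<in> {..<n}" "j \<in> {..<n}"
  then have ij: "i < n" "j < n"
    by auto
  show "(\<lambda>k. resid n \<rho> t (\<sigma>s k) (Ps k) $$ (i,j)) \<longlonglongrightarrow> resid n \<rho> t \<sigma> P $$ (i,j)"
    unfolding resid_index[OF ij] by (intro tendsto_intros assms ij)
qed

lemma minimizing_seq_exists:
  fixes f :: "'a \<Rightarrow> real"
  assumes "A \<noteq> {}"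
  obtains x where "\<And>k. x k \<in> A" "\<And>k. f (x k) < (INF a\<in>A. f a) + 1 / (real k + 1)"
proof -
  have "\<exists>a. a \<in> A \<and> f a < (INF a\<in>A. f a) + 1 / (real k + 1)" for k :: nat
  proof -
    have "(INF a\<in>A. f a) < (INF a\<in>A. f a) + 1 / (real k + 1)"
      by (simp add: add_pos_pos)
    then show ?thesis
      using cInf_lessD[of "f ` A"] assms by blast
  qed
  then have "\<forall>k::nat. \<exists>a. a \<in> A \<and> f a < (INF a\<in>A. f a) + 1 / (real k + 1)"
    by blast
  then obtain x where "\<forall>k. x k \<in> A \<and> f (x k) < (INF a\<in>A. f a) + 1 / (real k + 1)"
    by (rule choice[THEN exE]) blast
  then show ?thesis
    using that by blast
qed

lemma resid_nearest_exists:
  assumes rho: "density n \<rho>" and F: "F \<subseteq> {\<sigma>. density n \<sigma>}" "F \<noteq> {}" "closed_mats n F"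
  obtains \<sigma>0 P0 where "\<sigma>0 \<in> F" "psd n P0"
    "\<And>\<sigma> P. \<sigma> \<in> F \<Longrightarrow> psd n P \<Longrightarrow>
      hs_inner n (resid n \<rho> t \<sigma>0 P0) (resid n \<rho> t \<sigma>0 P0) \<le> hs_inner n (resid n \<rho> t \<sigma> P) (resid n \<rho> t \<sigma> P)"
proof -
  define nm where "nm p = hs_inner n (resid n \<rho> t (fst p) (snd p)) (resid n \<rho> t (fst p) (snd p))" for p
  define A where "A = F \<times> {P. psd n P}"
  define d where "d = (INF p\<in>A. nm p)"
  have "A \<noteq> {}"
    using F(2) psd_zero unfolding A_def by blast
  then obtain ps where ps: "\<And>k. ps k \<in> A" and near: "\<And>k. nm (ps k) < d + 1 / (real k + 1)"
    unfolding d_def by (rule minimizing_seq_exists[where f = nm]) blast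
  have seq: "\<And>k. fst (ps k) \<in> F" "\<And>k. psd n (snd (ps k))"
    using ps unfolding A_def by (auto simp: mem_Times_iff)
  have bound: "nm (ps k) \<le> d + 1" for k
  proof -
    have "1 / (real k + 1) \<le> 1"
      by simp
    then show ?thesis
      using near[of k] by linarith
  qed
  obtain r \<sigma>0 P0 where r: "strict_mono r" and \<sigma>0: "\<sigma>0 \<in> F" and P0: "psd n P0"
    and \<sigma>_lim: "\<And>i j. i < n \<Longrightarrow> j < n \<Longrightarrow> (\<lambda>k. fst (ps (r k)) $$ (i,j)) \<longlonglongrightarrow> \<sigma>0 $$ (i,j)"
    and P_lim: "\<And>i j. i < n \<Longrightarrow> j < n \<Longrightarrow> (\<lambda>k. snd (ps (r k)) $$ (i,j)) \<longlonglongrightarrow> P0 $$ (i,j)"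
    using resid_bounded_convergent_subseq[where \<sigma>s="\<lambda>k. fst (ps k)" and Ps="\<lambda>k. snd (ps k)",
        OF rho F(1,3) seq bound[unfolded nm_def]]
    by blast
  have "(\<lambda>k. nm (ps (r k))) \<longlonglongrightarrow> nm (\<sigma>0, P0)"
    unfolding nm_def fst_conv snd_conv by (rule tendsto_hs_inner_self_resid[OF \<sigma>_lim P_lim])
  moreover have "(\<lambda>k. d + inverse (real (Suc k))) \<longlonglongrightarrow> d"
    using tendsto_add[OF tendsto_const LIMSEQ_inverse_real_of_nat] by simp
  moreover have "nm (ps (r k)) \<le> d + inverse (real (Suc k))" for k
  proof -
    have "1 / (real (r k) + 1) \<le> 1 / (real k + 1)"
      using seq_suble[OF r, of k] by (simp add: frac_le)
    then show ?thesis
      using near[of "r k"] by (simp add: inverse_eq_divide add.commute)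
  qed
  ultimately have "nm (\<sigma>0, P0) \<le> d"
    by (intro LIMSEQ_le) auto
  also have "d \<le> nm (\<sigma>, P)" if "\<sigma> \<in> F" "psd n P" for \<sigma> P
    unfolding d_def using that
    by (intro cINF_lower bdd_belowI[of _ 0]) (auto simp: A_def nm_def hs_inner_self_nonneg)
  finally show ?thesis
    using that[OF \<sigma>0 P0] unfolding nm_def by simp
qed

text \<open>First-order optimality of the nearest point \<open>z\<close>: moving towards any other point of the
  convex set cannot decrease \<open>\<parallel>z\<parallel>\<^sup>2\<close>, so \<open>\<langle>z, w - z\<rangle> \<ge> 0\<close>.\<close>

lemma resid_nearest_variational:
  assumes F: "F \<subseteq> {\<sigma>. density n \<sigma>}" "convex_mats F"
    and \<sigma>0: "\<sigma>0 \<in> F" and P0: "psd n P0" and z: "z = resid n \<rho> t \<sigma>0 P0"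
    and nearest: "\<And>\<sigma> P. \<sigma> \<in> F \<Longrightarrow> psd n P \<Longrightarrow> hs_inner n z z \<le> hs_inner n (resid n \<rho> t \<sigma> P) (resid n \<rho> t \<sigma> P)"
    and \<sigma>: "\<sigma> \<in> F" and P: "psd n P"
  shows "hs_inner n z (resid n \<rho> t \<sigma> P) \<ge> hs_inner n z z"
proof -
  define W where "W = mat n n (\<lambda>(i,j). resid n \<rho> t \<sigma> P $$ (i,j) - z $$ (i,j))"
  have carrier: "\<And>\<sigma>. \<sigma> \<in> F \<Longrightarrow> \<sigma> \<in> carrier_mat n n"
    using F(1) density_carrier by blast
  have "2 * \<theta> * hs_inner n z W + \<theta>^2 * hs_inner n W W \<ge> 0" if \<theta>: "0 < \<theta>" "\<theta> \<le> 1" for \<theta>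
  proof -
    define \<sigma>\<theta> where "\<sigma>\<theta> = complex_of_real \<theta> \<cdot>\<^sub>m \<sigma> + complex_of_real (1 - \<theta>) \<cdot>\<^sub>m \<sigma>0"
    define P\<theta> where "P\<theta> = mat n n (\<lambda>(i,j). of_real \<theta> * P $$ (i,j) + of_real (1 - \<theta>) * P0 $$ (i,j))"
    have "\<sigma>\<theta> \<in> F"
      using F(2) \<sigma> \<sigma>0 \<theta> unfolding convex_mats_def \<sigma>\<theta>_def by auto
    moreover have "psd n P\<theta>"
      unfolding P\<theta>_def by (rule psd_conic_comb[OF P P0]) (use \<theta> in auto)
    ultimately have "hs_inner n z z \<le> hs_inner n (resid n \<rho> t \<sigma>\<theta> P\<theta>) (resid n \<rho> t \<sigma>\<theta> P\<theta>)"
      by (rule nearest)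
    also have "\<dots> = hs_inner n z z + 2 * \<theta> * hs_inner n z W + \<theta>^2 * hs_inner n W W"
    proof (rule hs_inner_self_add)
      fix i j
      assume ij: "i < n" "j < n"
      have "resid n \<rho> t \<sigma>\<theta> P\<theta> $$ (i,j) = \<rho> $$ (i,j)
          - of_real t * (of_real \<theta> * \<sigma> $$ (i,j) + of_real (1 - \<theta>) * \<sigma>0 $$ (i,j))
          - (of_real \<theta> * P $$ (i,j) + of_real (1 - \<theta>) * P0 $$ (i,j))"
        unfolding \<sigma>\<theta>_def P\<theta>_def using ij carrier[OF \<sigma>] carrier[OF \<sigma>0] by simp
      also have "\<dots> = z $$ (i,j) + of_real \<theta> * W $$ (i,j)"
        unfolding W_def z using ij by (simp add: algebra_simps)
      finally show "resid n \<rho> t \<sigma>\<theta> P\<theta> $$ (i,j) = z $$ (i,j) + of_real \<theta> * W $$ (i,j)" .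
    qed
    finally show ?thesis
      by simp
  qed
  then have "hs_inner n z W \<ge> 0"
    using nonneg_if_quadratic_nonneg[OF hs_inner_self_nonneg] by blast
  moreover have "hs_inner n z (resid n \<rho> t \<sigma> P) = hs_inner n z z + 1 * hs_inner n z W"
    by (rule hs_inner_add_right) (simp add: W_def)
  ultimately show ?thesis
    by simp
qed

lemma hermitian_resid:
  assumes "psd n \<rho>" "psd n \<sigma>" "psd n P"
  shows "hermitian n (resid n \<rho> t \<sigma> P)"
  unfolding hermitian_def
proof (intro allI impI)
  fix i j
  assume ij: "i < n" "j < n"
  have "\<rho> $$ (j,i) = cnj (\<rho> $$ (i,j))" "\<sigma> $$ (j,i) = cnj (\<sigma> $$ (i,j))" "P $$ (j,i) = cnj (P $$ (i,j))"
    using psd_hermitian_entry[OF assms(1) ij] psd_hermitian_entry[OF assms(2) ij]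
      psd_hermitian_entry[OF assms(3) ij] by auto
  then show "resid n \<rho> t \<sigma> P $$ (j,i) = cnj (resid n \<rho> t \<sigma> P $$ (i,j))"
    using ij by simp
qed

text \<open>The bound must survive \<open>P = \<mu> Q\<close> for every \<open>\<mu> \<ge> 0\<close>.\<close>

lemma hs_inner_nonpos_if_separates_resid:
  assumes sep: "\<And>P. psd n P \<Longrightarrow> d \<le> hs_inner n z (resid n \<rho> t \<sigma>0 P)" and d: "d > 0" and Q: "psd n Q"
  shows "hs_inner n z Q \<le> 0"
proof (rule ccontr)
  assume "\<not> hs_inner n z Q \<le> 0"
  then have q: "hs_inner n z Q > 0"
    by simp
  define c0 where "c0 = hs_inner n z (resid n \<rho> t \<sigma>0 (0\<^sub>m n n))"
  define \<mu> where "\<mu> = (\<bar>c0\<bar> + 1) / hs_inner n z Q"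
  have "\<mu> \<ge> 0"
    using q unfolding \<mu>_def by simp
  then have "psd n (complex_of_real \<mu> \<cdot>\<^sub>m Q)"
    by (rule psd_smult[OF Q])
  then have "d \<le> hs_inner n z (resid n \<rho> t \<sigma>0 (complex_of_real \<mu> \<cdot>\<^sub>m Q))"
    by (rule sep)
  also have "\<dots> = c0 + (- \<mu>) * hs_inner n z Q"
    unfolding c0_def by (rule hs_inner_add_right) (use psd_carrier[OF Q] in simp)
  also have "\<dots> = c0 - (\<bar>c0\<bar> + 1)"
    using q unfolding \<mu>_def by simp
  finally show False
    using d by linarith
qed

lemma psd_uminus_if_hs_inner_nonpos:
  assumes z: "hermitian n z" and nonpos: "\<And>Q. psd n Q \<Longrightarrow> hs_inner n z Q \<le> 0"
  shows "psd n (mat n n (\<lambda>(i,j). - z $$ (i,j)))"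
proof (rule psd_if_hs_inner_nonneg)
  show "hermitian n (mat n n (\<lambda>(i,j). - z $$ (i,j)))"
    unfolding hermitian_def
  proof (intro allI impI)
    fix i j
    assume "i < n" "j < n"
    then show "mat n n (\<lambda>(i,j). - z $$ (i,j)) $$ (j,i) = cnj (mat n n (\<lambda>(i,j). - z $$ (i,j)) $$ (i,j))"
      using hermitianD[OF z] by simp
  qed
  fix Q
  assume "psd n Q"
  then show "hs_inner n (mat n n (\<lambda>(i,j). - z $$ (i,j))) Q \<ge> 0"
    using nonpos hs_inner_uminus_left[of n "mat n n (\<lambda>(i,j). - z $$ (i,j))" z Q] by simp
qed simp

lemma psd_separation:
  assumes rho: "density n \<rho>" and F: "F \<subseteq> {\<sigma>. density n \<sigma>}" "F \<noteq> {}" "convex_mats F" "closed_mats n F"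
    and not_psd: "\<And>\<sigma>. \<sigma> \<in> F \<Longrightarrow> \<not> psd n (\<rho> - complex_of_real t \<cdot>\<^sub>m \<sigma>)"
  obtains Y \<delta> where "psd n Y" "\<delta> > 0" "\<And>\<sigma>. \<sigma> \<in> F \<Longrightarrow> hs_inner n Y \<rho> + \<delta> \<le> t * hs_inner n Y \<sigma>"
proof -
  obtain \<sigma>0 P0 where \<sigma>0: "\<sigma>0 \<in> F" and P0: "psd n P0"
    and nearest: "\<And>\<sigma> P. \<sigma> \<in> F \<Longrightarrow> psd n P \<Longrightarrow>
      hs_inner n (resid n \<rho> t \<sigma>0 P0) (resid n \<rho> t \<sigma>0 P0) \<le> hs_inner n (resid n \<rho> t \<sigma> P) (resid n \<rho> t \<sigma> P)"
    using resid_nearest_exists[where t = t, OF rho F(1,2,4)] by blast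
  define z where "z = resid n \<rho> t \<sigma>0 P0"
  define d where "d = hs_inner n z z"
  have nearest_z: "\<And>\<sigma> P. \<sigma> \<in> F \<Longrightarrow> psd n P \<Longrightarrow> hs_inner n z z \<le> hs_inner n (resid n \<rho> t \<sigma> P) (resid n \<rho> t \<sigma> P)"
    using nearest unfolding z_def .
  have var: "d \<le> hs_inner n z (resid n \<rho> t \<sigma> P)" if "\<sigma> \<in> F" "psd n P" for \<sigma> P
    unfolding d_def by (rule resid_nearest_variational[OF F(1,3) \<sigma>0 P0 z_def nearest_z that])
  have carrier: "\<rho> \<in> carrier_mat n n" "\<sigma>0 \<in> carrier_mat n n" "P0 \<in> carrier_mat n n"
    using density_carrier rho F(1) \<sigma>0 psd_carrier[OF P0] by auto
  have d_pos: "d > 0"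
  proof (rule ccontr)
    assume "\<not> d > 0"
    then have "d = 0"
      using hs_inner_self_nonneg[of n z] unfolding d_def by linarith
    then have "z $$ (i,j) = 0" if "i < n" "j < n" for i j
      using hs_inner_self_eq_0_entry that unfolding d_def by blast
    then have "\<rho> - complex_of_real t \<cdot>\<^sub>m \<sigma>0 = P0"
      using carrier unfolding z_def by (intro eq_matI) auto
    then show False
      using not_psd[OF \<sigma>0] P0 by simp
  qed
  have z_cone: "hs_inner n z Q \<le> 0" if "psd n Q" for Q
    using hs_inner_nonpos_if_separates_resid[OF var[OF \<sigma>0] d_pos that] .
  have z_sep: "d \<le> hs_inner n z \<rho> - t * hs_inner n z \<sigma>" if "\<sigma> \<in> F" for \<sigma>
  proof -
    have "hs_inner n z (resid n \<rho> t \<sigma> (0\<^sub>m n n)) = hs_inner n z \<rho> + (- t) * hs_inner n z \<sigma>"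
      by (rule hs_inner_add_right) simp
    then show ?thesis
      using var[OF that psd_zero] by simp
  qed
  define Y where "Y = mat n n (\<lambda>(i,j). - z $$ (i,j))"
  have Y_inner: "hs_inner n Y Q = - hs_inner n z Q" for Q
    by (rule hs_inner_uminus_left) (simp add: Y_def)
  have "density n \<sigma>0"
    using F(1) \<sigma>0 by auto
  then have z_hermitian: "hermitian n z"
    unfolding z_def by (intro hermitian_resid density_psd rho P0)
  have "psd n Y"
    unfolding Y_def using z_hermitian z_cone by (rule psd_uminus_if_hs_inner_nonpos)
  then show ?thesis
  proof (rule that[OF _ d_pos])
    fix \<sigma>
    assume "\<sigma> \<in> F"
    then show "hs_inner n Y \<rho> + d \<le> t * hs_inner n Y \<sigma>"
      unfolding Y_inner mult_minus_right using z_sep by force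
  qed
qed

lemma INF_p_err_le:
  assumes "T \<in> tasks n" "F \<subseteq> {\<sigma>. density n \<sigma>}" "\<sigma> \<in> F"
  shows "(INF \<sigma>\<in>F. p_err T \<sigma>) \<le> p_err T \<sigma>"
proof (rule cINF_lower[OF _ assms(3)])
  have "p_err T \<sigma>' \<ge> 0" if "\<sigma>' \<in> F" for \<sigma>'
    using p_err_nonneg[OF assms(1) density_psd] assms(2) that by blast
  then show "bdd_below ((\<lambda>\<sigma>. p_err T \<sigma>) ` F)"
    by (intro bdd_belowI[of _ 0]) auto
qed

lemma p_err_ratio_ge:
  assumes F: "F \<subseteq> {\<sigma>. density n \<sigma>}" and rho: "density n \<rho>"
    and T: "T \<in> tasks n" "(INF \<sigma>\<in>F. p_err T \<sigma>) > 0"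
    and s: "s \<ge> 0" "\<sigma> \<in> F" "density n \<tau>" "\<rho> = complex_of_real s \<cdot>\<^sub>m \<tau> + complex_of_real (1 - s) \<cdot>\<^sub>m \<sigma>"
  shows "1 - s \<le> p_err T \<rho> / (INF \<sigma>\<in>F. p_err T \<sigma>)"
proof -
  define m where "m = (INF \<sigma>\<in>F. p_err T \<sigma>)"
  have m: "m > 0" "m \<le> p_err T \<sigma>"
    using T(2) INF_p_err_le[OF T(1) F s(2)] unfolding m_def by auto
  have "p_err T \<rho> \<ge> (1 - s) * m"
  proof (cases "s \<ge> 1")
    case True
    then have "(1 - s) * m \<le> 0"
      using m by (simp add: mult_nonpos_nonneg)
    then show ?thesis
      using p_err_nonneg[OF T(1) density_psd[OF rho]] by linarith
  next
    case False
    have "p_err T \<rho> = s * p_err T \<tau> + (1 - s) * p_err T \<sigma>"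
      unfolding s(4) using F s(2) by (intro p_err_linear[OF T(1)] density_carrier[OF s(3)]) (auto intro: density_carrier)
    moreover have "s * p_err T \<tau> \<ge> 0"
      using p_err_nonneg[OF T(1) density_psd[OF s(3)]] s(1) by simp
    moreover have "(1 - s) * m \<le> (1 - s) * p_err T \<sigma>"
      using m False by (intro mult_left_mono) auto
    ultimately show ?thesis
      by linarith
  qed
  then show ?thesis
    using m unfolding m_def[symmetric] by (simp add: le_divide_eq)
qed

lemma exists_task_p_err_ratio_less:
  assumes rho: "density n \<rho>" and F: "F \<subseteq> {\<sigma>. density n \<sigma>}" "F \<noteq> {}" "convex_mats F" "closed_mats n F"
    and t: "t > 0"
    and not_psd: "\<And>\<sigma>. \<sigma> \<in> F \<Longrightarrow> \<not> psd n (\<rho> - complex_of_real t \<cdot>\<^sub>m \<sigma>)"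
  obtains T where "T \<in> tasks n" "(INF \<sigma>\<in>F. p_err T \<sigma>) > 0" "p_err T \<rho> / (INF \<sigma>\<in>F. p_err T \<sigma>) < t"
proof -
  obtain Y \<delta> where Y: "psd n Y" and \<delta>: "\<delta> > 0"
    and sep: "\<And>\<sigma>. \<sigma> \<in> F \<Longrightarrow> hs_inner n Y \<rho> + \<delta> \<le> t * hs_inner n Y \<sigma>"
    using psd_separation[OF rho F not_psd] by blast
  obtain c where c: "c > 0" and effect: "psd n (1\<^sub>m n - complex_of_real c \<cdot>\<^sub>m Y)"
    using psd_one_minus_smult[OF Y] by blast
  define T where "T = test_task n (complex_of_real c \<cdot>\<^sub>m Y)"
  have T: "T \<in> tasks n"
    unfolding T_def using psd_smult[OF Y] c effect by (intro test_task_in_tasks) auto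
  have p_err_T: "p_err T \<omega> = c * hs_inner n Y \<omega>" if "density n \<omega>" for \<omega>
  proof -
    have "p_err T \<omega> = hs_inner n (complex_of_real c \<cdot>\<^sub>m Y) \<omega>"
      unfolding T_def p_err_test_task using psd_carrier[OF Y] density_carrier[OF that]
      by (intro Re_mtr_mult_hermitian psd_hermitian density_psd that) auto
    then show ?thesis
      unfolding hs_inner_smult_left[OF psd_carrier[OF Y]] .
  qed
  define m where "m = (INF \<sigma>\<in>F. p_err T \<sigma>)"
  have "p_err T \<rho> + c * \<delta> \<le> t * p_err T \<sigma>" if "\<sigma> \<in> F" for \<sigma>
    using mult_left_mono[OF sep[OF that], of c] c p_err_T[OF rho] p_err_T[of \<sigma>] that F(1)
    by (auto simp: algebra_simps)
  then have "(p_err T \<rho> + c * \<delta>) / t \<le> m"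
    unfolding m_def using t by (intro cINF_greatest[OF F(2)]) (simp add: divide_le_eq mult.commute)
  moreover have "p_err T \<rho> \<ge> 0"
    using p_err_nonneg[OF T density_psd[OF rho]] .
  moreover have "c * \<delta> > 0"
    using c \<delta> by simp
  ultimately have "p_err T \<rho> < t * m" "0 < t * m"
    using t by (auto simp: divide_le_eq mult.commute)
  then have "m > 0"
    using t by (simp add: zero_less_mult_iff)
  moreover have "p_err T \<rho> / m < t"
    using \<open>m > 0\<close> \<open>p_err T \<rho> < t * m\<close> by (simp add: divide_less_eq mult.commute)
  ultimately show ?thesis
    unfolding m_def by (rule that[OF T])
qed

lemma density_eq_if_psd_diff:
  assumes rho: "density n \<rho>" and sigma: "density n \<sigma>" and P: "psd n (\<rho> - 1 \<cdot>\<^sub>m \<sigma>)"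
  shows "\<rho> = \<sigma>"
proof -
  have carrier: "\<rho> \<in> carrier_mat n n" "\<sigma> \<in> carrier_mat n n"
    using density_carrier rho sigma by auto
  then have entry: "(\<rho> - 1 \<cdot>\<^sub>m \<sigma>) $$ (i,j) = \<rho> $$ (i,j) - \<sigma> $$ (i,j)" if "i < n" "j < n" for i j
    using that by simp
  have "(\<Sum>i<n. (\<rho> - 1 \<cdot>\<^sub>m \<sigma>) $$ (i,i)) = (\<Sum>i<n. \<rho> $$ (i,i)) - (\<Sum>i<n. \<sigma> $$ (i,i))"
    using entry by (simp add: sum_subtractf)
  then have "(\<Sum>i<n. (\<rho> - 1 \<cdot>\<^sub>m \<sigma>) $$ (i,i)) = 0"
    unfolding density_trace[OF rho] density_trace[OF sigma] by simp
  then show ?thesis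
    using psd_trace_zero_entry[OF P] entry carrier by (intro eq_matI) auto
qed

lemma density_rescaled_psd_diff:
  assumes rho: "density n \<rho>" and sigma: "density n \<sigma>" and t: "t < 1"
    and P: "psd n (\<rho> - complex_of_real t \<cdot>\<^sub>m \<sigma>)"
  shows "density n (complex_of_real (1 / (1 - t)) \<cdot>\<^sub>m (\<rho> - complex_of_real t \<cdot>\<^sub>m \<sigma>))"
    (is "density n ?\<tau>")
proof -
  have carrier: "\<rho> \<in> carrier_mat n n" "\<sigma> \<in> carrier_mat n n"
    using density_carrier rho sigma by auto
  have psd: "psd n ?\<tau>"
    by (rule psd_smult[OF P]) (use t in simp)
  have "mtr ?\<tau> = (\<Sum>i<n. of_real (1 / (1 - t)) * (\<rho> $$ (i,i) - of_real t * \<sigma> $$ (i,i)))"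
    unfolding mtr_def using carrier by (intro sum.cong) auto
  also have "\<dots> = of_real (1 / (1 - t)) * ((\<Sum>i<n. \<rho> $$ (i,i)) - of_real t * (\<Sum>i<n. \<sigma> $$ (i,i)))"
    by (simp add: sum_distrib_left sum_subtractf algebra_simps)
  also have "\<dots> = of_real ((1 / (1 - t)) * (1 - t))"
    unfolding density_trace[OF rho] density_trace[OF sigma] by simp
  also have "\<dots> = 1"
    using t by simp
  finally show ?thesis
    unfolding density_def using psd by simp
qed

lemma density_decomposition_if_psd_diff:
  assumes rho: "density n \<rho>" and sigma: "density n \<sigma>" and t: "t \<le> 1"
    and P: "psd n (\<rho> - complex_of_real t \<cdot>\<^sub>m \<sigma>)"
  obtains \<tau> where "density n \<tau>" "\<rho> = complex_of_real (1 - t) \<cdot>\<^sub>m \<tau> + complex_of_real t \<cdot>\<^sub>m \<sigma>"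
proof (cases "t = 1")
  case True
  then have "\<rho> = \<sigma>"
    using density_eq_if_psd_diff[OF rho sigma] P by simp
  moreover have "\<sigma> = 0 \<cdot>\<^sub>m \<rho> + 1 \<cdot>\<^sub>m \<sigma>"
    using density_carrier[OF rho] density_carrier[OF sigma] \<open>\<rho> = \<sigma>\<close> by (intro eq_matI) auto
  ultimately show ?thesis
    using that[OF rho] True by simp
next
  case False
  with t have t: "t < 1"
    by simp
  have carrier: "\<rho> \<in> carrier_mat n n" "\<sigma> \<in> carrier_mat n n"
    using density_carrier rho sigma by auto
  define \<tau> where "\<tau> = complex_of_real (1 / (1 - t)) \<cdot>\<^sub>m (\<rho> - complex_of_real t \<cdot>\<^sub>m \<sigma>)"
  have inverse: "of_real (1 - t) * of_real (1 / (1 - t)) = (1::complex)"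
    using t by (simp flip: of_real_mult)
  have "\<rho> = complex_of_real (1 - t) \<cdot>\<^sub>m \<tau> + complex_of_real t \<cdot>\<^sub>m \<sigma>"
  proof (rule eq_matI)
    fix i j
    assume "i < dim_row (complex_of_real (1 - t) \<cdot>\<^sub>m \<tau> + complex_of_real t \<cdot>\<^sub>m \<sigma>)"
      "j < dim_col (complex_of_real (1 - t) \<cdot>\<^sub>m \<tau> + complex_of_real t \<cdot>\<^sub>m \<sigma>)"
    then have "(complex_of_real (1 - t) \<cdot>\<^sub>m \<tau> + complex_of_real t \<cdot>\<^sub>m \<sigma>) $$ (i,j) =
        of_real (1 - t) * (of_real (1 / (1 - t)) * (\<rho> $$ (i,j) - of_real t * \<sigma> $$ (i,j))) + of_real t * \<sigma> $$ (i,j)"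
      using carrier unfolding \<tau>_def by simp
    then show "\<rho> $$ (i,j) = (complex_of_real (1 - t) \<cdot>\<^sub>m \<tau> + complex_of_real t \<cdot>\<^sub>m \<sigma>) $$ (i,j)"
      unfolding mult.assoc[symmetric] inverse by simp
  qed (use carrier in \<open>auto simp: \<tau>_def\<close>)
  with density_rescaled_psd_diff[OF rho sigma t P] show ?thesis
    unfolding \<tau>_def[symmetric] by (rule that)
qed

definition resource_weights :: "nat \<Rightarrow> complex mat set \<Rightarrow> complex mat \<Rightarrow> real set" where
  "resource_weights n F \<rho> = {s. s \<ge> 0 \<and> (\<exists>\<sigma>\<in>F. \<exists>\<tau>. density n \<tau> \<and>
     \<rho> = complex_of_real s \<cdot>\<^sub>m \<tau> + complex_of_real (1 - s) \<cdot>\<^sub>m \<sigma>)}"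

lemma WoR_eq_Inf_resource_weights: "WoR n F \<rho> = Inf (resource_weights n F \<rho>)"
  unfolding WoR_def resource_weights_def ..

lemma one_in_resource_weights:
  assumes "density n \<rho>" "\<sigma> \<in> F" "\<sigma> \<in> carrier_mat n n"
  shows "1 \<in> resource_weights n F \<rho>"
proof -
  have "\<rho> = complex_of_real 1 \<cdot>\<^sub>m \<rho> + complex_of_real (1 - 1) \<cdot>\<^sub>m \<sigma>"
    using density_carrier[OF assms(1)] assms(3) by (intro eq_matI) auto
  then show ?thesis
    unfolding resource_weights_def using assms(1,2) by auto
qed

lemma bdd_below_resource_weights: "bdd_below (resource_weights n F \<rho>)"
  unfolding resource_weights_def by (intro bdd_belowI[of _ 0]) auto

lemma resource_weights_nonempty:
  assumes "F \<subseteq> {\<sigma>. density n \<sigma>}" "F \<noteq> {}" "density n \<rho>"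
  shows "resource_weights n F \<rho> \<noteq> {}"
  using assms one_in_resource_weights density_carrier by blast

lemma WoR_nonneg:
  assumes "F \<subseteq> {\<sigma>. density n \<sigma>}" "F \<noteq> {}" "density n \<rho>"
  shows "WoR n F \<rho> \<ge> 0"
  unfolding WoR_eq_Inf_resource_weights using resource_weights_nonempty[OF assms]
  by (rule cInf_greatest) (simp add: resource_weights_def)

lemma WoR_UN:
  assumes "\<And>k. Fk k \<subseteq> {\<sigma>. density n \<sigma>}" "\<And>k. Fk k \<noteq> {}" "density n \<rho>"
  shows "WoR n (\<Union>k. Fk k) \<rho> = (INF k. WoR n (Fk k) \<rho>)"
proof -
  have "resource_weights n (\<Union>k. Fk k) \<rho> = (\<Union>k. resource_weights n (Fk k) \<rho>)"
    unfolding resource_weights_def by blast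
  moreover have "(INF s \<in> (\<Union>k. resource_weights n (Fk k) \<rho>). s) = (INF k. INF s \<in> resource_weights n (Fk k) \<rho>. s)"
    using resource_weights_nonempty[OF assms]
    by (intro cINF_UNION) (auto simp: resource_weights_def intro: bdd_belowI[of _ 0])
  ultimately show ?thesis
    unfolding WoR_eq_Inf_resource_weights by simp
qed

definition min_err_ratio :: "nat \<Rightarrow> complex mat set \<Rightarrow> complex mat \<Rightarrow> real" where
  "min_err_ratio n F \<rho> = (INF T \<in> {T \<in> tasks n. (INF \<sigma>\<in>F. p_err T \<sigma>) > 0}. p_err T \<rho> / (INF \<sigma>\<in>F. p_err T \<sigma>))"

lemma min_err_ratio_le:
  assumes rho: "density n \<rho>" and T: "T \<in> tasks n" "(INF \<sigma>\<in>F. p_err T \<sigma>) > 0"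
  shows "min_err_ratio n F \<rho> \<le> p_err T \<rho> / (INF \<sigma>\<in>F. p_err T \<sigma>)"
  unfolding min_err_ratio_def
proof (rule cINF_lower)
  show "bdd_below ((\<lambda>T. p_err T \<rho> / (INF \<sigma>\<in>F. p_err T \<sigma>)) ` {T \<in> tasks n. (INF \<sigma>\<in>F. p_err T \<sigma>) > 0})"
    using p_err_nonneg[OF _ density_psd[OF rho]] by (intro bdd_belowI[of _ 0]) auto
qed (use T in simp)

lemma INF_p_err_test_task_one:
  assumes "F \<subseteq> {\<sigma>. density n \<sigma>}" "F \<noteq> {}"
  shows "(INF \<sigma>\<in>F. p_err (test_task n (1\<^sub>m n)) \<sigma>) = 1"
proof -
  have "(INF \<sigma>\<in>F. p_err (test_task n (1\<^sub>m n)) \<sigma>) = (INF \<sigma>\<in>F. 1)"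
    using p_err_test_task_one assms(1) by (intro INF_cong) auto
  then show ?thesis
    using assms(2) by simp
qed

lemma min_err_ratio_le_1:
  assumes F: "F \<subseteq> {\<sigma>. density n \<sigma>}" "F \<noteq> {}" and rho: "density n \<rho>"
  shows "min_err_ratio n F \<rho> \<le> 1"
  using min_err_ratio_le[where F = F, OF rho test_task_one_in_tasks] INF_p_err_test_task_one[OF F]
    p_err_test_task_one[OF rho] by simp

lemma one_minus_weight_le_min_err_ratio:
  assumes F: "F \<subseteq> {\<sigma>. density n \<sigma>}" "F \<noteq> {}" and rho: "density n \<rho>"
    and s: "s \<in> resource_weights n F \<rho>"
  shows "1 - s \<le> min_err_ratio n F \<rho>"
  unfolding min_err_ratio_def
proof (rule cINF_greatest)
  have "test_task n (1\<^sub>m n) \<in> {T \<in> tasks n. (INF \<sigma>\<in>F. p_err T \<sigma>) > 0}"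
    using test_task_one_in_tasks INF_p_err_test_task_one[OF F] by simp
  then show "{T \<in> tasks n. (INF \<sigma>\<in>F. p_err T \<sigma>) > 0} \<noteq> {}"
    by blast
  fix T
  assume "T \<in> {T \<in> tasks n. (INF \<sigma>\<in>F. p_err T \<sigma>) > 0}"
  then show "1 - s \<le> p_err T \<rho> / (INF \<sigma>\<in>F. p_err T \<sigma>)"
    using s p_err_ratio_ge[OF F(1) rho] unfolding resource_weights_def by blast
qed

lemma min_err_ratio_eq_one_minus_WoR:
  assumes F: "F \<subseteq> {\<sigma>. density n \<sigma>}" "F \<noteq> {}" "convex_mats F" "closed_mats n F" and rho: "density n \<rho>"
  shows "min_err_ratio n F \<rho> = 1 - WoR n F \<rho>"
proof -
  define W where "W = resource_weights n F \<rho>"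
  define t where "t = min_err_ratio n F \<rho>"
  obtain \<sigma>1 where "\<sigma>1 \<in> F"
    using F(2) by blast
  then have one_W: "1 \<in> W"
    unfolding W_def using one_in_resource_weights[OF rho] density_carrier F(1) by blast
  have W_bdd: "bdd_below W"
    unfolding W_def by (rule bdd_below_resource_weights)
  have "1 - t \<le> Inf W"
    using one_W one_minus_weight_le_min_err_ratio[OF F(1,2) rho] unfolding W_def t_def
    by (intro cInf_greatest) (auto simp: algebra_simps)
  moreover have "t \<le> 1 - Inf W"
  proof (rule ccontr)
    assume "\<not> t \<le> 1 - Inf W"
    then have t_gt: "t > 1 - Inf W"
      by simp
    have "t \<le> 1"
      unfolding t_def by (rule min_err_ratio_le_1[OF F(1,2) rho])
    have "Inf W \<le> 1"
      using one_W W_bdd by (rule cInf_lower)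
    then have "t > 0"
      using t_gt by simp
    have not_psd: "\<not> psd n (\<rho> - complex_of_real t \<cdot>\<^sub>m \<sigma>)" if \<sigma>: "\<sigma> \<in> F" for \<sigma>
    proof
      assume "psd n (\<rho> - complex_of_real t \<cdot>\<^sub>m \<sigma>)"
      with \<sigma> F(1) obtain \<tau> where "density n \<tau>" "\<rho> = complex_of_real (1 - t) \<cdot>\<^sub>m \<tau> + complex_of_real t \<cdot>\<^sub>m \<sigma>"
        using density_decomposition_if_psd_diff[OF rho _ \<open>t \<le> 1\<close>] by blast
      then have "1 - t \<in> W"
        unfolding W_def resource_weights_def using \<sigma> \<open>t \<le> 1\<close> by auto
      then have "Inf W \<le> 1 - t"
        using W_bdd by (rule cInf_lower)
      then show False
        using t_gt by linarith
    qed
    obtain T where "T \<in> tasks n" "(INF \<sigma>\<in>F. p_err T \<sigma>) > 0" "p_err T \<rho> / (INF \<sigma>\<in>F. p_err T \<sigma>) < t"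
      using exists_task_p_err_ratio_less[OF rho F \<open>t > 0\<close> not_psd] by blast
    then show False
      using min_err_ratio_le[OF rho] unfolding t_def by fastforce
  qed
  ultimately show ?thesis
    unfolding WoR_eq_Inf_resource_weights W_def[symmetric] t_def[symmetric] by linarith
qed

lemma one_minus_SUP_one_minus:
  fixes w :: "'a \<Rightarrow> real"
  assumes "bdd_below (range w)"
  shows "1 - (SUP k. 1 - w k) = (INF k. w k)"
proof -
  obtain M where "\<And>k. M \<le> w k"
    using assms unfolding bdd_below_def by blast
  then have "bdd_above (range (\<lambda>k. 1 - w k))"
    by (intro bdd_aboveI[of _ "1 - M"]) (auto simp: algebra_simps)
  then have "1 - (SUP k. 1 - w k) \<le> w k" for k
    using cSUP_upper[of k UNIV "\<lambda>k. 1 - w k"] by simp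
  then have "1 - (SUP k. 1 - w k) \<le> (INF k. w k)"
    by (intro cINF_greatest) auto
  moreover have "(SUP k. 1 - w k) \<le> 1 - (INF k. w k)"
    using cINF_lower[OF assms] by (intro cSUP_least) (auto simp: algebra_simps)
  ultimately show ?thesis
    by linarith
qed

theorem theorem12:
  fixes n :: nat and Fk :: "'k \<Rightarrow> complex mat set" and \<rho> :: "complex mat"
  assumes free_states: "\<And>k. Fk k \<subseteq> {\<sigma>. density n \<sigma>}"
    and nonempty: "\<And>k. Fk k \<noteq> {}"
    and convex: "\<And>k. convex_mats (Fk k)"
    and closed_k: "\<And>k. closed_mats n (Fk k)"
    and closed_F: "closed_mats n (\<Union>k. Fk k)"
    and rho: "density n \<rho>"
    and resource: "\<rho> \<notin> (\<Union>k. Fk k)"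
  shows "1 - (SUP k. INF T \<in> {T \<in> tasks n. (INF \<sigma>\<in>Fk k. p_err T \<sigma>) > 0}.
                 p_err T \<rho> / (INF \<sigma>\<in>Fk k. p_err T \<sigma>))
         = WoR n (\<Union>k. Fk k) \<rho>"
proof -
  have "min_err_ratio n (Fk k) \<rho> = 1 - WoR n (Fk k) \<rho>" for k
    using min_err_ratio_eq_one_minus_WoR[OF free_states nonempty convex closed_k rho] .
  moreover have "1 - (SUP k. 1 - WoR n (Fk k) \<rho>) = (INF k. WoR n (Fk k) \<rho>)"
    using WoR_nonneg[OF free_states nonempty rho]
    by (intro one_minus_SUP_one_minus bdd_belowI[of _ 0]) auto
  ultimately show ?thesis
    unfolding WoR_UN[OF free_states nonempty rho] min_err_ratio_def by simp
qed

end
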